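(* Consider the linear regression model $y=X\theta+u$ (context). Fix an index $i\le k$, $\eta_{i,n}>0$, $a_{i,n}\ge0$, and let $E_{H,i,n}=[\tilde\theta_{H,i}-\hat\sigma a_{i,n},\tilde\theta_{H,i}+\hat\sigma a_{i,n}]$. For every $n\ge2$ with $n>k$, $$\inf_{\theta\in\mathbb{R}^k,\sigma\in(0,\infty)}P_{n,\theta,\sigma}(\theta_i\in E_{H,i,n})\ \ge\ T_{n-k}\big(n^{1/2}(a_{i,n}/\xi_{i,n}-\eta_{i,n})\big)-T_{n-k}\big(-n^{1/2}a_{i,n}/\xi_{i,n}\big).$$
   Context: Model: $y=X\theta+u$ with $y\in\mathbb{R}^n$, $X$ a non-stochastic $n\times k$ matrix of rank $k\ge1$, $\theta\in\mathbb{R}^k$, $u\sim N(0,\sigma^2I_n)$, $\sigma>0$. $P_{n,\theta,\sigma}$ is the probability under $(\theta,\sigma)$. $\hat\theta_{LS}=(X'X)^{-1}X'y$, $\hat\sigma^2=(y-X\hat\theta_{LS})'(y-X\hat\theta_{LS})/(n-k)$ (defined for $n>k$), $\xi_{i,n}\ge0$ with $\xi_{i,n}^2=((X'X/n)^{-1})_{ii}$. The feasible hard-thresholding estimator is $\tilde\theta_{H,i}=\hat\theta_{LS,i}\mathbf{1}(|\hat\theta_{LS,i}|>\hat\sigma\xi_{i,n}\eta_{i,n})$. $T_m$ is the cdf of the $t$-distribution with $m$ degrees of freedom. *)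

theory Defs
  imports "HOL-Analysis.Analysis" "HOL-Probability.Probability"
begin

definition student_t_density :: "nat \<Rightarrow> real \<Rightarrow> real" where
  "student_t_density m x =
     Gamma ((real m + 1) / 2) / (sqrt (real m * pi) * Gamma (real m / 2))
     * (1 + x\<^sup>2 / real m) powr (- (real m + 1) / 2)"

definition student_t_cdf :: "nat \<Rightarrow> real \<Rightarrow> real" where
  "student_t_cdf m x = (LBINT t:{..x}. student_t_density m t)"

definition error_law :: "real \<Rightarrow> (real^'n) measure" where
  "error_law \<sigma> = density lborel (\<lambda>u. ennreal (\<Prod>j\<in>UNIV. normal_density 0 \<sigma> (u $ j)))"

definition P_model :: "real^'k^'n \<Rightarrow> real^'k \<Rightarrow> real \<Rightarrow> (real^'n) measure" where
  "P_model X \<theta> \<sigma> = distr (error_law \<sigma>) lborel (\<lambda>u. X *v \<theta> + u)"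

definition theta_LS :: "real^'k^'n \<Rightarrow> real^'n \<Rightarrow> real^'k" where
  "theta_LS X y = matrix_inv (transpose X ** X) *v (transpose X *v y)"

definition sigma_hat :: "real^'k^'n \<Rightarrow> real^'n \<Rightarrow> real" where
  "sigma_hat X y = sqrt ((norm (y - X *v theta_LS X y))\<^sup>2 / (real CARD('n) - real CARD('k)))"

definition xi :: "real^'k^'n \<Rightarrow> 'k \<Rightarrow> real" where
  "xi X i = sqrt (matrix_inv ((1 / real CARD('n)) *\<^sub>R (transpose X ** X)) $ i $ i)"

definition theta_H :: "real^'k^'n \<Rightarrow> real \<Rightarrow> 'k \<Rightarrow> real^'n \<Rightarrow> real" where
  "theta_H X \<eta> i y =
     theta_LS X y $ i * (if \<bar>theta_LS X y $ i\<bar> > sigma_hat X y * xi X i * \<eta> then 1 else 0)"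

definition E_H :: "real^'k^'n \<Rightarrow> real \<Rightarrow> real \<Rightarrow> 'k \<Rightarrow> real^'n \<Rightarrow> real set" where
  "E_H X \<eta> a i y = {theta_H X \<eta> i y - sigma_hat X y * a .. theta_H X \<eta> i y + sigma_hat X y * a}"

end

theory Submission
  imports Defs
begin

text \<open>
  Write \<open>y = X *v \<theta> + u\<close> and let \<open>w\<close> be the \<open>i\<close>-th row of \<open>(X'X)\<^sup>-\<^sup>1 X'\<close>. The estimation error
  of the least-squares estimator is then \<open>w \<bullet> u\<close>, \<open>xi X i = \<surd>n \<parallel>w\<parallel>\<close>, and \<open>sigma_hat = \<parallel>P u\<parallel> / \<surd>(n - k)\<close>,
  where \<open>P\<close> projects onto the orthogonal complement \<open>V\<close> of the column space of \<open>X\<close>, to which \<open>w\<close> is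
  orthogonal. Whichever way the threshold decides, \<open>\<theta> $ i\<close> lies in the interval as soon as
  \<open>-sigma_hat a \<le> s (w \<bullet> u) \<le> sigma_hat (a - xi X i \<eta>)\<close>, where \<open>s = -1\<close> if \<open>\<theta> $ i \<ge> 0\<close> and \<open>s = 1\<close>
  otherwise. An orthogonal change of coordinates sending \<open>s w / \<parallel>w\<parallel>\<close> to a coordinate vector and \<open>V\<close>
  onto \<open>n - k\<close> other coordinate axes leaves \<open>N(0, \<sigma>\<^sup>2 I)\<close> invariant and turns this event into
  \<open>c \<rho> \<le> y $ k \<le> d \<rho>\<close>, where \<open>\<rho>\<close> is the root mean square of those \<open>n - k\<close> coordinates. That event
  has probability \<open>T\<^sub>n\<^sub>-\<^sub>k(d) - T\<^sub>n\<^sub>-\<^sub>k(c)\<close>, whatever \<open>\<theta>\<close> and \<open>\<sigma>\<close> are.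
\<close>

section \<open>Linear change of variables on \<open>real^'n\<close>\<close>

lemma measurable_vec_lambda_PiM:
  fixes M :: "real measure"
  assumes "sets M = sets borel"
  shows "(\<lambda>f. vec_lambda f :: real^'n) \<in> PiM UNIV (\<lambda>_::'n. M) \<rightarrow>\<^sub>M borel"
proof -
  have "(\<lambda>f. vec_lambda f :: real^'n) \<in> PiM UNIV (\<lambda>_::'n. borel) \<rightarrow>\<^sub>M borel"
  proof (rule borel_measurable_euclidean_space[THEN iffD2], intro ballI)
    fix b :: "real^'n" assume "b \<in> Basis"
    then obtain i where b: "b = axis i 1" by (auto simp: Basis_vec_def)
    show "(\<lambda>f. vec_lambda f \<bullet> b) \<in> borel_measurable (PiM UNIV (\<lambda>_::'n. borel))"
      unfolding b inner_axis by simp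
  qed
  moreover have "sets (PiM UNIV (\<lambda>_::'n. M)) = sets (PiM UNIV (\<lambda>_::'n. borel))"
    using assms by (intro sets_PiM_cong) auto
  ultimately show ?thesis using measurable_cong_sets by blast
qed

lemma prod_Basis_vec: "(\<Prod>b\<in>(Basis :: (real^'n) set). g b) = (\<Prod>i\<in>UNIV. g (axis i 1))"
proof -
  have B: "(Basis :: (real^'n) set) = (\<lambda>i. axis i 1) ` UNIV" by (auto simp: Basis_vec_def)
  have "inj (\<lambda>i::'n. axis i (1::real))" by (auto intro!: injI simp: axis_eq_axis)
  then show ?thesis unfolding B by (simp add: prod.reindex o_def)
qed

lemma sum_Basis_vec: "(\<Sum>b\<in>(Basis :: (real^'n) set). g b) = (\<Sum>i\<in>UNIV. g (axis i 1))"
proof -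
  have B: "(Basis :: (real^'n) set) = (\<lambda>i. axis i 1) ` UNIV" by (auto simp: Basis_vec_def)
  have "inj (\<lambda>i::'n. axis i (1::real))" by (auto intro!: injI simp: axis_eq_axis)
  then show ?thesis unfolding B by (simp add: sum.reindex o_def)
qed

interpretation lborel_product: product_sigma_finite "\<lambda>_. lborel :: real measure"
  by standard

lemma lborel_vec_eq_distr_PiM:
  "(lborel :: (real^'n) measure) = distr (PiM UNIV (\<lambda>_::'n. lborel)) borel vec_lambda"
proof (rule lborel_eqI)
  fix l u :: "real^'n"
  assume "\<And>b. b \<in> Basis \<Longrightarrow> l \<bullet> b \<le> u \<bullet> b"
  then have le: "l $ i \<le> u $ i" for i by (force simp: Basis_vec_def inner_axis)
  have "vec_lambda -` box l u \<inter> space (PiM UNIV (\<lambda>_::'n. lborel)) = PiE UNIV (\<lambda>i. {l$i<..<u$i})"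
    by (auto simp: space_PiM mem_box_cart PiE_def Pi_iff)
  then have "emeasure (distr (PiM UNIV (\<lambda>_::'n. lborel)) borel vec_lambda) (box l u)
       = emeasure (PiM UNIV (\<lambda>_::'n. lborel)) (PiE UNIV (\<lambda>i. {l$i<..<u$i}))"
    by (subst emeasure_distr[OF measurable_vec_lambda_PiM]) (simp_all del: vec_lambda_beta)
  also have "\<dots> = (\<Prod>i\<in>UNIV. ennreal (u$i - l$i))"
    using le by (subst lborel_product.emeasure_PiM) auto
  also have "\<dots> = ennreal (prod ((\<bullet>) (u - l)) Basis)"
    using le by (simp add: prod_ennreal prod_Basis_vec inner_axis del: vec_lambda_beta)
  finally show "emeasure (distr (PiM UNIV (\<lambda>_::'n. lborel)) borel vec_lambda) (box l u)
      = ennreal (prod ((\<bullet>) (u - l)) Basis)" .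
qed (rule sets_distr)

lemma nn_integral_distr_PiM_coordinate:
  fixes M :: "real measure" and m :: "'n::finite" and g :: "real^'n \<Rightarrow> ennreal"
  assumes "product_sigma_finite (\<lambda>_::'n. M)" and M: "sets M = sets borel"
    and g[measurable]: "g \<in> borel_measurable borel"
  shows "(\<integral>\<^sup>+x. g x \<partial>distr (PiM UNIV (\<lambda>_::'n. M)) borel vec_lambda)
       = (\<integral>\<^sup>+f. (\<integral>\<^sup>+t. g (vec_lambda (f(m := t))) \<partial>M) \<partial>PiM (UNIV - {m}) (\<lambda>_. M))"
proof -
  interpret product_sigma_finite "\<lambda>_::'n. M" by fact
  have U: "insert m (UNIV - {m}) = UNIV" by auto
  have v: "(\<lambda>f. vec_lambda f :: real^'n) \<in> PiM UNIV (\<lambda>_::'n. M) \<rightarrow>\<^sub>M borel"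
    by (rule measurable_vec_lambda_PiM[OF M])
  have gv: "(\<lambda>f. g (vec_lambda f)) \<in> borel_measurable (PiM (insert m (UNIV - {m})) (\<lambda>_::'n. M))"
    using measurable_comp[OF v g] by (simp add: U o_def)
  have "(\<integral>\<^sup>+x. g x \<partial>distr (PiM UNIV (\<lambda>_::'n. M)) borel vec_lambda)
      = (\<integral>\<^sup>+f. g (vec_lambda f) \<partial>PiM (insert m (UNIV - {m})) (\<lambda>_::'n. M))"
    by (simp add: nn_integral_distr[OF v] U)
  also have "\<dots> = (\<integral>\<^sup>+f. (\<integral>\<^sup>+t. g (vec_lambda (f(m := t))) \<partial>M) \<partial>PiM (UNIV - {m}) (\<lambda>_. M))"
    by (rule product_nn_integral_insert[OF _ _ gv]) auto
  finally show ?thesis .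
qed

lemma borel_measurable_linear:
  fixes f :: "'a::euclidean_space \<Rightarrow> 'b::euclidean_space"
  assumes "linear f" shows "f \<in> borel_measurable borel"
  by (rule borel_measurable_continuous_onI, rule linear_continuous_on)
     (use assms in \<open>simp add: linear_conv_bounded_linear\<close>)

text \<open>The linear change of variables formula for \<open>\<integral>\<^sup>+\<close> on \<open>real^'n\<close> with a merely finite index
  type (the versions in \<open>Change_Of_Vars\<close> require a wellorder), proved by decomposing a linear map
  into elementary ones (\<open>induct_linear_elementary\<close>).\<close>

definition lborel_change_of_vars :: "(real^'n \<Rightarrow> real^'n) \<Rightarrow> bool" where
  "lborel_change_of_vars f \<longleftrightarrow>
     (\<forall>g \<in> borel_measurable borel. det (matrix f) \<noteq> 0 \<longrightarrow>
        (\<integral>\<^sup>+x. g (f x) \<partial>lborel) * ennreal \<bar>det (matrix f)\<bar> = (\<integral>\<^sup>+x. g x \<partial>lborel))"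

lemma lborel_change_of_vars_comp:
  assumes lf: "linear f" and lg: "linear g"
    and f: "lborel_change_of_vars f" and g: "lborel_change_of_vars g"
  shows "lborel_change_of_vars (f \<circ> g)"
  unfolding lborel_change_of_vars_def
proof (intro ballI impI)
  fix h :: "real^'a \<Rightarrow> ennreal" assume h[measurable]: "h \<in> borel_measurable borel"
  have dm: "det (matrix (f \<circ> g)) = det (matrix f) * det (matrix g)"
    using matrix_compose[OF lg lf] by (simp add: det_mul)
  moreover assume "det (matrix (f \<circ> g)) \<noteq> 0"
  ultimately have df: "det (matrix f) \<noteq> 0" and dg: "det (matrix g) \<noteq> 0" by auto
  have [measurable]: "f \<in> borel_measurable borel" by (rule borel_measurable_linear[OF lf])
  have "(\<integral>\<^sup>+x. h ((f \<circ> g) x) \<partial>lborel) * ennreal \<bar>det (matrix (f \<circ> g))\<bar>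
      = ((\<integral>\<^sup>+x. (\<lambda>y. h (f y)) (g x) \<partial>lborel) * ennreal \<bar>det (matrix g)\<bar>) * ennreal \<bar>det (matrix f)\<bar>"
    by (simp add: dm abs_mult ennreal_mult mult_ac)
  also have "\<dots> = (\<integral>\<^sup>+y. h (f y) \<partial>lborel) * ennreal \<bar>det (matrix f)\<bar>"
    by (subst bspec[OF g[unfolded lborel_change_of_vars_def]]) (auto simp: dg)
  also have "\<dots> = (\<integral>\<^sup>+y. h y \<partial>lborel)"
    using f df unfolding lborel_change_of_vars_def by simp
  finally show "(\<integral>\<^sup>+x. h ((f \<circ> g) x) \<partial>lborel) * ennreal \<bar>det (matrix (f \<circ> g))\<bar>
      = (\<integral>\<^sup>+y. h y \<partial>lborel)" .
qed

lemma lborel_change_of_vars_zero_row: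
  assumes "\<And>x. f x $ i = 0" shows "lborel_change_of_vars f"
proof -
  have "row i (matrix f) = 0"
    using assms by (simp add: row_def matrix_def vec_eq_iff)
  then have "det (matrix f) = 0" by (rule det_zero_row)
  then show ?thesis unfolding lborel_change_of_vars_def by auto
qed

lemma lborel_change_of_vars_diagonal: "lborel_change_of_vars (\<lambda>x::real^'n. \<chi> i. c i * x$i)"
  unfolding lborel_change_of_vars_def
proof (intro ballI impI)
  let ?f = "\<lambda>x::real^'n. \<chi> i. c i * x$i"
  fix g :: "real^'n \<Rightarrow> ennreal" assume g[measurable]: "g \<in> borel_measurable borel"
  assume d: "det (matrix ?f) \<noteq> 0"
  have detf: "det (matrix ?f) = (\<Prod>i\<in>UNIV. c i)"
    by (subst det_diagonal) (auto simp: matrix_def axis_def)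
  with d have c0: "c i \<noteq> 0" for i by auto
  define c' where "c' b = c (SOME i. b = axis i (1::real))" for b :: "real^'n"
  have c'a: "c' (axis i 1) = c i" for i
    unfolding c'_def by (rule arg_cong[where f=c]) (auto simp: axis_eq_axis)
  have c'0: "c' j \<noteq> 0" if "j \<in> Basis" for j
    using that c0 c'a by (auto simp: Basis_vec_def)
  define T where "T x = 0 + (\<Sum>j\<in>Basis. (c' j * (x \<bullet> j)) *\<^sub>R j)" for x :: "real^'n"
  have Tf: "T x = ?f x" for x
  proof -
    have "T x $ k = (\<Sum>i\<in>UNIV. (c i * x $ i) * axis i 1 $ k)" for k
      unfolding T_def by (simp add: sum_component sum_Basis_vec c'a inner_axis)
    then show ?thesis by (simp add: vec_eq_iff axis_def if_distrib sum.delta cong: if_cong)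
  qed
  have L: "lborel = density (distr lborel borel T) (\<lambda>_. (\<Prod>j\<in>Basis. \<bar>c' j\<bar>))"
    unfolding T_def by (rule lborel_affine_euclidean) (use c'0 in auto)
  have K: "(\<Prod>j\<in>Basis. \<bar>c' j\<bar>) = \<bar>det (matrix ?f)\<bar>"
    by (simp add: prod_Basis_vec c'a detf abs_prod)
  have [measurable]: "T \<in> borel_measurable borel"
    unfolding T_def by measurable
  have "linear ?f" by (rule linearI) (simp_all add: vec_eq_iff algebra_simps)
  then have [measurable]: "?f \<in> borel_measurable borel" by (rule borel_measurable_linear)
  have "(\<integral>\<^sup>+x. g x \<partial>lborel) = (\<integral>\<^sup>+x. ennreal (\<Prod>j\<in>Basis. \<bar>c' j\<bar>) * g (T x) \<partial>lborel)"
    by (subst L) (simp add: nn_integral_density nn_integral_distr)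
  also have "\<dots> = (\<integral>\<^sup>+x. g (?f x) * ennreal \<bar>det (matrix ?f)\<bar> \<partial>lborel)"
    by (simp add: K Tf mult.commute)
  also have "\<dots> = (\<integral>\<^sup>+x. g (?f x) \<partial>lborel) * ennreal \<bar>det (matrix ?f)\<bar>"
    by (rule nn_integral_multc) simp
  finally show "(\<integral>\<^sup>+x. g (?f x) \<partial>lborel) * ennreal \<bar>det (matrix ?f)\<bar> = (\<integral>\<^sup>+x. g x \<partial>lborel)"
    by simp
qed

lemma lborel_change_of_vars_swap:
  fixes m n :: "'n::finite" assumes "m \<noteq> n"
  shows "lborel_change_of_vars (\<lambda>x::real^'n. \<chi> i. x $ Transposition.transpose m n i)"
  unfolding lborel_change_of_vars_def
proof (intro ballI impI)
  let ?\<tau> = "Transposition.transpose m n"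
  let ?h = "\<lambda>x::real^'n. \<chi> i. x $ ?\<tau> i"
  fix g :: "real^'n \<Rightarrow> ennreal" assume g[measurable]: "g \<in> borel_measurable borel"
  have "linear ?h"
    by (rule linearI) (simp_all add: plus_vec_def scaleR_vec_def)
  then have [measurable]: "?h \<in> borel_measurable borel" by (rule borel_measurable_linear)
  have "(\<chi> i j. if ?\<tau> i = j then 1 else 0) = (\<chi> i j. if j = ?\<tau> i then 1 else (0::real))"
    by (auto intro!: Cart_lambda_cong)
  then have "matrix ?h = transpose (\<chi> i j. mat 1 $ i $ ?\<tau> j)"
    by (auto simp: matrix_eq transpose_def axis_def mat_def matrix_def)
  then have 1: "\<bar>det (matrix ?h)\<bar> = 1"
    by (simp add: det_permute_columns permutes_swap_id sign_swap_id abs_mult)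
  have p: "?\<tau> permutes (UNIV :: 'n set)"
    by (rule permutes_swap_id) auto
  have D: "distr lborel borel ?h = lborel"
  proof (rule lborel_eqI[symmetric])
    fix l u :: "real^'n"
    assume "\<And>b. b \<in> Basis \<Longrightarrow> l \<bullet> b \<le> u \<bullet> b"
    then have le: "l $ i \<le> u $ i" for i by (force simp: Basis_vec_def inner_axis)
    have "?h -` box l u = box (?h l) (?h u)"
      by (auto simp: mem_box_cart) (metis transpose_involutory)+
    then have "emeasure (distr lborel borel ?h) (box l u) = emeasure lborel (box (?h l) (?h u))"
      by (subst emeasure_distr) simp_all
    also have "\<dots> = ennreal (prod ((\<bullet>) (?h u - ?h l)) Basis)"
      using le by (subst emeasure_lborel_box) (auto simp: Basis_vec_def inner_axis)
    also have "prod ((\<bullet>) (?h u - ?h l)) Basis = (\<Prod>i\<in>UNIV. u $ ?\<tau> i - l $ ?\<tau> i)"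
      by (simp only: prod_Basis_vec) (simp add: inner_axis)
    also have "(\<Prod>i\<in>UNIV. u $ ?\<tau> i - l $ ?\<tau> i) = (\<Prod>i\<in>UNIV. u $ i - l $ i)"
      using prod.permute[OF p, of "\<lambda>i. u $ i - l $ i"] by (simp add: o_def)
    finally show "emeasure (distr lborel borel ?h) (box l u) = ennreal (prod ((\<bullet>) (u - l)) Basis)"
      by (simp add: prod_Basis_vec inner_axis)
  qed simp
  have "(\<integral>\<^sup>+x. g (?h x) \<partial>lborel) = (\<integral>\<^sup>+x. g x \<partial>distr lborel borel ?h)"
    by (simp add: nn_integral_distr)
  then show "(\<integral>\<^sup>+x. g (?h x) \<partial>lborel) * ennreal \<bar>det (matrix ?h)\<bar> = (\<integral>\<^sup>+x. g x \<partial>lborel)"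
    by (simp add: D 1)
qed

lemma lborel_change_of_vars_shear:
  fixes m n :: "'n::finite" assumes mn: "m \<noteq> n"
  shows "lborel_change_of_vars (\<lambda>x::real^'n. \<chi> i. if i = m then x$m + x$n else x$i)"
  unfolding lborel_change_of_vars_def
proof (intro ballI impI)
  let ?h = "\<lambda>x::real^'n. \<chi> i. if i = m then x$m + x$n else x$i"
  let ?P = "PiM (UNIV - {m}) (\<lambda>_::'n. lborel)"
  fix g :: "real^'n \<Rightarrow> ennreal" assume g[measurable]: "g \<in> borel_measurable borel"
  have "matrix ?h = (\<chi> k. if k = m then row m (mat 1) + 1 *s row n (mat 1) else row k (mat 1 :: real^'n^'n))"
    using mn by (auto simp: vec_eq_iff matrix_def row_def mat_def axis_def)
  then have 1: "det (matrix ?h) = 1"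
    using det_row_operation[OF mn, of "mat 1 :: real^'n^'n" 1] by simp
  have "linear ?h" by (rule linearI) (simp_all add: vec_eq_iff algebra_simps)
  then have [measurable]: "?h \<in> borel_measurable borel" by (rule borel_measurable_linear)
  have split: "(\<integral>\<^sup>+x. G x \<partial>lborel)
      = (\<integral>\<^sup>+f. (\<integral>\<^sup>+t. G (vec_lambda (f(m := t))) \<partial>lborel) \<partial>?P)"
    if "G \<in> borel_measurable borel" for G :: "real^'n \<Rightarrow> ennreal"
    by (subst lborel_vec_eq_distr_PiM) (rule nn_integral_distr_PiM_coordinate[OF lborel_product.product_sigma_finite_axioms sets_lborel that])
  have "(\<integral>\<^sup>+x. g (?h x) \<partial>lborel)
      = (\<integral>\<^sup>+f. (\<integral>\<^sup>+t. g (vec_lambda (f(m := t + f n))) \<partial>lborel) \<partial>?P)"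
  proof -
    have "?h (vec_lambda (f(m := t))) = vec_lambda (f(m := t + f n))" for f t
      using mn by (auto simp: vec_eq_iff)
    then show ?thesis by (subst split) simp_all
  qed
  also have "\<dots> = (\<integral>\<^sup>+f. (\<integral>\<^sup>+t. g (vec_lambda (f(m := t))) \<partial>lborel) \<partial>?P)"
  proof (rule nn_integral_cong)
    fix f :: "'n \<Rightarrow> real"
    have "(\<lambda>t. f(m := t)) \<in> borel \<rightarrow>\<^sub>M PiM UNIV (\<lambda>_::'n. lborel)"
      unfolding fun_upd_def by (rule measurable_PiM_single') (auto simp: space_PiM)
    from measurable_comp[OF this measurable_vec_lambda_PiM]
    have "(\<lambda>t. g (vec_lambda (f(m := t)))) \<in> borel_measurable borel"
      by (simp add: o_def)
    from nn_integral_real_affine[OF this, of 1 "f n"]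
    show "(\<integral>\<^sup>+t. g (vec_lambda (f(m := t + f n))) \<partial>lborel) = (\<integral>\<^sup>+t. g (vec_lambda (f(m := t))) \<partial>lborel)"
      by (simp add: add.commute)
  qed
  also have "\<dots> = (\<integral>\<^sup>+x. g x \<partial>lborel)"
    by (rule split[symmetric]) simp
  finally show "(\<integral>\<^sup>+x. g (?h x) \<partial>lborel) * ennreal \<bar>det (matrix ?h)\<bar> = (\<integral>\<^sup>+x. g x \<partial>lborel)"
    by (simp add: 1)
qed

lemma nn_integral_linear_change_of_vars:
  fixes f :: "real^'n \<Rightarrow> real^'n"
  assumes "linear f" and "det (matrix f) \<noteq> 0" and "g \<in> borel_measurable borel"
  shows "(\<integral>\<^sup>+x. g (f x) \<partial>lborel) * ennreal \<bar>det (matrix f)\<bar> = (\<integral>\<^sup>+x. g x \<partial>lborel)"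
proof -
  have "lborel_change_of_vars f"
    by (rule induct_linear_elementary[OF assms(1)])
       (auto intro: lborel_change_of_vars_comp[unfolded comp_def] lborel_change_of_vars_zero_row
         lborel_change_of_vars_diagonal lborel_change_of_vars_swap lborel_change_of_vars_shear)
  with assms show ?thesis unfolding lborel_change_of_vars_def by auto
qed

section \<open>The Gaussian error law\<close>

abbreviation normal_measure :: "real \<Rightarrow> real measure" where
  "normal_measure \<sigma> \<equiv> density lborel (normal_density 0 \<sigma>)"

lemma product_sigma_finite_normal_measure:
  assumes "0 < \<sigma>" shows "product_sigma_finite (\<lambda>_. normal_measure \<sigma>)"
proof -
  interpret prob_space "normal_measure \<sigma>" using assms by (rule prob_space_normal_density)
  show ?thesis by unfold_locales
qed

lemma density_PiM_lborel_eq_PiM_normal_measure: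
  assumes "0 < \<sigma>"
  shows "density (PiM UNIV (\<lambda>_::'n::finite. lborel)) (\<lambda>f. \<Prod>j\<in>UNIV. ennreal (normal_density 0 \<sigma> (f j)))
       = PiM UNIV (\<lambda>_. normal_measure \<sigma>)"
proof (rule product_sigma_finite.PiM_eqI[OF product_sigma_finite_normal_measure[OF assms]])
  fix A :: "'n \<Rightarrow> real set" assume "\<And>i. i \<in> UNIV \<Longrightarrow> A i \<in> sets (normal_measure \<sigma>)"
  then have A[measurable]: "A i \<in> sets borel" for i by simp
  have "indicator (PiE UNIV A) f = (\<Prod>j\<in>UNIV. indicator (A j) (f j) :: ennreal)" for f :: "'n \<Rightarrow> real"
    by (auto simp: indicator_def PiE_iff intro: prod_zero)
  moreover have "PiE UNIV A \<in> sets (PiM UNIV (\<lambda>_::'n. lborel))"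
    by (rule sets_PiM_I_finite) auto
  ultimately have "emeasure (density (PiM UNIV (\<lambda>_. lborel))
        (\<lambda>f. \<Prod>j\<in>UNIV. ennreal (normal_density 0 \<sigma> (f j)))) (PiE UNIV A)
      = (\<integral>\<^sup>+f. (\<Prod>j\<in>UNIV. ennreal (normal_density 0 \<sigma> (f j)) * indicator (A j) (f j))
          \<partial>PiM UNIV (\<lambda>_::'n. lborel))"
    by (simp add: emeasure_density prod.distrib)
  also have "\<dots> = (\<Prod>j\<in>UNIV. (\<integral>\<^sup>+x. ennreal (normal_density 0 \<sigma> x) * indicator (A j) x \<partial>lborel))"
    by (rule lborel_product.product_nn_integral_prod) auto
  finally show "emeasure (density (PiM UNIV (\<lambda>_. lborel))
        (\<lambda>f. \<Prod>j\<in>UNIV. ennreal (normal_density 0 \<sigma> (f j)))) (PiE UNIV A)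
      = (\<Prod>j\<in>UNIV. emeasure (normal_measure \<sigma>) (A j))"
    by (simp add: emeasure_density)
qed (simp_all cong: sets_PiM_cong)

lemma error_law_eq_distr_PiM:
  assumes "0 < \<sigma>"
  shows "(error_law \<sigma> :: (real^'n) measure)
       = distr (PiM UNIV (\<lambda>_::'n. normal_measure \<sigma>)) borel vec_lambda"
proof -
  have "error_law \<sigma> = density (distr (PiM UNIV (\<lambda>_::'n. lborel)) borel vec_lambda)
                         (\<lambda>u::real^'n. ennreal (\<Prod>j\<in>UNIV. normal_density 0 \<sigma> (u $ j)))"
    unfolding error_law_def by (subst lborel_vec_eq_distr_PiM) (rule refl)
  also have "\<dots> = distr (density (PiM UNIV (\<lambda>_::'n. lborel))
                    (\<lambda>f. ennreal (\<Prod>j\<in>UNIV. normal_density 0 \<sigma> (f j)))) borel vec_lambda"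
    by (subst density_distr[OF _ measurable_vec_lambda_PiM]) simp_all
  also have "(\<lambda>f::'n \<Rightarrow> real. ennreal (\<Prod>j\<in>UNIV. normal_density 0 \<sigma> (f j)))
      = (\<lambda>f. \<Prod>j\<in>UNIV. ennreal (normal_density 0 \<sigma> (f j)))"
    by (simp add: prod_ennreal)
  finally show ?thesis by (simp add: density_PiM_lborel_eq_PiM_normal_measure[OF assms])
qed

lemma prob_space_error_law:
  assumes "0 < \<sigma>" shows "prob_space (error_law \<sigma> :: (real^'n) measure)"
proof -
  have "prob_space (PiM UNIV (\<lambda>_::'n. normal_measure \<sigma>))"
    by (rule prob_space_PiM) (rule prob_space_normal_density[OF assms])
  then show ?thesis unfolding error_law_eq_distr_PiM[OF assms]
    by (rule prob_space.prob_space_distr) (simp add: measurable_vec_lambda_PiM)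
qed

lemma sets_error_law[simp, measurable_cong]: "sets (error_law \<sigma>) = sets borel"
  by (simp add: error_law_def)

lemma prod_normal_density_eq_norm:
  "(\<Prod>j\<in>UNIV. normal_density 0 \<sigma> ((u::real^'n) $ j))
     = (1 / sqrt (2 * pi * \<sigma>\<^sup>2)) ^ CARD('n) * exp (- (norm u)\<^sup>2 / (2 * \<sigma>\<^sup>2))"
proof -
  have "(norm u)\<^sup>2 = (\<Sum>j\<in>UNIV. (u $ j)\<^sup>2)"
    by (subst power2_norm_eq_inner) (simp add: inner_vec_def power2_eq_square)
  moreover have "(\<Prod>j\<in>UNIV. normal_density 0 \<sigma> (u $ j))
      = (1 / sqrt (2 * pi * \<sigma>\<^sup>2)) ^ CARD('n) * (\<Prod>j\<in>UNIV. exp (- (u $ j)\<^sup>2 / (2 * \<sigma>\<^sup>2)))"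
    by (simp only: normal_density_def diff_zero prod.distrib prod_constant card_UNIV)
  ultimately show ?thesis
    by (simp add: exp_sum[symmetric] sum_divide_distrib sum_negf)
qed

lemma nn_integral_error_law_orthogonal_transformation:
  fixes Q :: "real^'n \<Rightarrow> real^'n"
  assumes Q: "orthogonal_transformation Q" and g[measurable]: "g \<in> borel_measurable borel"
  shows "(\<integral>\<^sup>+u. g (Q u) \<partial>error_law \<sigma>) = (\<integral>\<^sup>+u. g u \<partial>error_law \<sigma>)"
proof -
  let ?G = "\<lambda>u::real^'n. ennreal (\<Prod>j\<in>UNIV. normal_density 0 \<sigma> (u $ j))"
  have lin: "linear Q" using Q by (rule orthogonal_transformation_linear)
  have [measurable]: "Q \<in> borel_measurable borel" by (rule borel_measurable_linear[OF lin])
  have d1: "\<bar>det (matrix Q)\<bar> = 1" using Q by simp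
  have GQ: "?G (Q u) = ?G u" for u
    using orthogonal_transformation_norm[OF Q] by (simp add: prod_normal_density_eq_norm)
  have "(\<integral>\<^sup>+u. g (Q u) \<partial>error_law \<sigma>) = (\<integral>\<^sup>+u. (\<lambda>v. ?G v * g v) (Q u) \<partial>lborel) * ennreal \<bar>det (matrix Q)\<bar>"
    unfolding error_law_def by (simp add: nn_integral_density GQ d1)
  also have "\<dots> = (\<integral>\<^sup>+u. ?G u * g u \<partial>lborel)"
    by (rule nn_integral_linear_change_of_vars[OF lin]) (use d1 in auto)
  finally show ?thesis
    unfolding error_law_def by (simp add: nn_integral_density)
qed

lemma measure_error_law_orthogonal_preimage:
  fixes Q :: "real^'n \<Rightarrow> real^'n"
  assumes Q: "orthogonal_transformation Q" and G[measurable]: "G \<in> sets borel"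
  shows "measure (error_law \<sigma>) {y. Q y \<in> G} = measure (error_law \<sigma>) G"
proof -
  have [measurable]: "Q \<in> borel_measurable borel"
    by (rule borel_measurable_linear[OF orthogonal_transformation_linear[OF Q]])
  have "emeasure (error_law \<sigma>) {y. Q y \<in> G} = (\<integral>\<^sup>+y. indicator {y. Q y \<in> G} y \<partial>error_law \<sigma>)"
    by (rule nn_integral_indicator[symmetric]) simp
  also have "\<dots> = (\<integral>\<^sup>+y. indicator G (Q y) \<partial>error_law \<sigma>)"
    by (intro nn_integral_cong) (simp add: indicator_def)
  also have "\<dots> = emeasure (error_law \<sigma>) G"
    by (subst nn_integral_error_law_orthogonal_transformation[OF Q]) simp_all
  finally show ?thesis by (simp add: measure_def)
qed

lemma nn_integral_error_law_coordinate:
  fixes k :: "'n::finite" and F :: "real \<Rightarrow> real^'n \<Rightarrow> ennreal"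
  assumes \<sigma>: "0 < \<sigma>"
    and F[measurable]: "(\<lambda>p. F (fst p) (snd p)) \<in> borel_measurable (borel \<Otimes>\<^sub>M borel)"
    and F_indep: "\<And>t y s. F t (\<chi> j. if j = k then s else y$j) = F t y"
  shows "(\<integral>\<^sup>+y. F (y$k) y \<partial>error_law \<sigma>) = (\<integral>\<^sup>+y. (\<integral>\<^sup>+t. F t y \<partial>normal_measure \<sigma>) \<partial>error_law \<sigma>)"
proof -
  interpret N: prob_space "normal_measure \<sigma>" by (rule prob_space_normal_density[OF \<sigma>])
  let ?P = "PiM (UNIV - {k}) (\<lambda>_::'n. normal_measure \<sigma>)"
  have split: "(\<integral>\<^sup>+y. G y \<partial>error_law \<sigma>)
      = (\<integral>\<^sup>+f. (\<integral>\<^sup>+t. G (vec_lambda (f(k := t))) \<partial>normal_measure \<sigma>) \<partial>?P)"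
    if "G \<in> borel_measurable borel" for G :: "real^'n \<Rightarrow> ennreal"
    unfolding error_law_eq_distr_PiM[OF \<sigma>]
    by (rule nn_integral_distr_PiM_coordinate[OF product_sigma_finite_normal_measure[OF \<sigma>] _ that])
       simp
  have m1: "(\<lambda>y::real^'n. F (y$k) y) \<in> borel_measurable borel"
    using measurable_comp[of "\<lambda>y::real^'n. (y$k, y)" _ "borel \<Otimes>\<^sub>M borel", OF _ F]
    by (simp add: o_def)
  have m2: "(\<lambda>y::real^'n. \<integral>\<^sup>+t. F t y \<partial>normal_measure \<sigma>) \<in> borel_measurable borel"
  proof (rule sigma_finite_measure.borel_measurable_nn_integral[OF N.sigma_finite_measure])
    show "case_prod (\<lambda>y t. F t y) \<in> borel_measurable (borel \<Otimes>\<^sub>M normal_measure \<sigma>)"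
      using measurable_comp[of "\<lambda>(y::real^'n, t::real). (t, y)" _ "borel \<Otimes>\<^sub>M borel", OF _ F]
      by (simp add: o_def case_prod_beta)
  qed
  have F_upd: "F t (vec_lambda (f(k := s))) = F t (vec_lambda (f(k := t)))" for f s t
  proof -
    have "vec_lambda (f(k := s)) = (\<chi> j. if j = k then s else (vec_lambda (f(k := t)) :: real^'n) $ j)"
      by (simp add: vec_eq_iff)
    then show ?thesis by (simp only: F_indep)
  qed
  have "(\<integral>\<^sup>+y. F (y$k) y \<partial>error_law \<sigma>)
      = (\<integral>\<^sup>+f. (\<integral>\<^sup>+t. F t (vec_lambda (f(k := t))) \<partial>normal_measure \<sigma>) \<partial>?P)"
    by (simp add: split[OF m1])
  also have "\<dots> = (\<integral>\<^sup>+f. (\<integral>\<^sup>+s. (\<integral>\<^sup>+t. F t (vec_lambda (f(k := s))) \<partial>normal_measure \<sigma>)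
                    \<partial>normal_measure \<sigma>) \<partial>?P)"
  proof (rule nn_integral_cong)
    fix f :: "'n \<Rightarrow> real"
    have "(\<integral>\<^sup>+t. F t (vec_lambda (f(k := s))) \<partial>normal_measure \<sigma>)
        = (\<integral>\<^sup>+t. F t (vec_lambda (f(k := t))) \<partial>normal_measure \<sigma>)" for s
      by (rule nn_integral_cong) (rule F_upd)
    moreover have "emeasure (normal_measure \<sigma>) UNIV = 1"
      using N.emeasure_space_1 by simp
    ultimately show "(\<integral>\<^sup>+t. F t (vec_lambda (f(k := t))) \<partial>normal_measure \<sigma>)
        = (\<integral>\<^sup>+s. (\<integral>\<^sup>+t. F t (vec_lambda (f(k := s))) \<partial>normal_measure \<sigma>) \<partial>normal_measure \<sigma>)"
      by (simp del: fun_upd_apply)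
  qed
  also have "\<dots> = (\<integral>\<^sup>+y. (\<integral>\<^sup>+t. F t y \<partial>normal_measure \<sigma>) \<partial>error_law \<sigma>)"
    by (simp add: split[OF m2])
  finally show ?thesis .
qed

lemma AE_error_law_coordinate_nonzero:
  fixes j :: "'n::finite"
  assumes "0 < \<sigma>"
  shows "AE y in error_law \<sigma>. (y::real^'n) $ j \<noteq> 0"
proof -
  have "AE x in lborel. x \<in> {0::real} \<longrightarrow> ennreal (normal_density 0 \<sigma> x) = 0"
    using AE_lborel_singleton[of "0::real"] by eventually_elim auto
  then have "{0::real} \<in> null_sets (normal_measure \<sigma>)"
    by (subst null_sets_density_iff) auto
  have "emeasure (error_law \<sigma>) {y::real^'n. y$j = 0} = (\<integral>\<^sup>+y. indicator {y. y$j = 0} y \<partial>error_law \<sigma>)"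
    by simp
  also have "\<dots> = (\<integral>\<^sup>+y. indicator {0} (y$j) \<partial>error_law \<sigma>)"
    by (intro nn_integral_cong) (simp add: indicator_def)
  also have "\<dots> = (\<integral>\<^sup>+(y::real^'n). (\<integral>\<^sup>+t. indicator {0::real} t \<partial>normal_measure \<sigma>) \<partial>error_law \<sigma>)"
    using nn_integral_error_law_coordinate[OF assms,
        where k=j and F="\<lambda>t (y::real^'n). indicator {0::real} t :: ennreal"]
    by simp
  also have "\<dots> = 0"
    using \<open>{0::real} \<in> null_sets (normal_measure \<sigma>)\<close> by (simp add: null_setsD1)
  finally show ?thesis by (intro AE_I'[of "{y. y$j = 0}"]) auto
qed

section \<open>The Student law of a studentized coordinate\<close>

definition coord_norm :: "'n set \<Rightarrow> real^'n::finite \<Rightarrow> real" where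
  "coord_norm S y = sqrt (\<Sum>j\<in>S. (y$j)\<^sup>2)"

lemma borel_measurable_coord_norm[measurable]: "coord_norm S \<in> borel_measurable borel"
  unfolding coord_norm_def by measurable

lemma coord_norm_nonneg: "coord_norm S y \<ge> 0"
  unfolding coord_norm_def by (simp add: sum_nonneg)

lemma AE_error_law_coord_norm_pos:
  fixes S :: "'n::finite set"
  assumes "0 < \<sigma>" and "S \<noteq> {}"
  shows "AE y in error_law \<sigma>. coord_norm S y > 0"
proof -
  obtain j where j: "j \<in> S" using assms(2) by auto
  show ?thesis
    using AE_error_law_coordinate_nonzero[OF assms(1), of j]
  proof eventually_elim
    fix y :: "real^'n" assume "y$j \<noteq> 0"
    then have "0 < (y$j)\<^sup>2" by simp
    also have "\<dots> \<le> (\<Sum>j\<in>S. (y$j)\<^sup>2)"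
      using j by (intro member_le_sum) auto
    finally show "coord_norm S y > 0" unfolding coord_norm_def by simp
  qed
qed

lemma coord_norm_rescale:
  assumes "r > 0"
  shows "coord_norm S (\<chi> j. if j \<in> S then y$j / r else y$j) = coord_norm S y / r"
proof -
  have "(\<Sum>j\<in>S. ((\<chi> j. if j \<in> S then y$j / r else y$j) $ j)\<^sup>2) = (\<Sum>j\<in>S. (y$j)\<^sup>2) / r\<^sup>2"
    by (simp add: power_divide sum_divide_distrib)
  then show ?thesis
    using assms unfolding coord_norm_def by (simp add: real_sqrt_divide)
qed

text \<open>Shrinking the coordinates in \<open>S\<close> by \<open>\<surd>\<lambda>\<close>, \<open>\<lambda> = 1 + s\<^sup>2/m\<close>, exactly absorbs the extra Gaussian
  factor in \<open>s\<close>: this is how the Student kernel \<open>\<lambda> powr (-(m+1)/2)\<close> arises.\<close>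

lemma prod_normal_density_shrink:
  fixes y :: "real^'n" and S :: "'n set" and s m :: real
  assumes "m > 0"
  defines "lam \<equiv> 1 + s\<^sup>2 / m"
  defines "z \<equiv> \<chi> j. if j \<in> S then y$j / sqrt lam else y$j"
  shows "(\<Prod>j\<in>UNIV. normal_density 0 \<sigma> (z $ j)) * normal_density 0 \<sigma> (s * coord_norm S z / sqrt m)
       = (\<Prod>j\<in>UNIV. normal_density 0 \<sigma> (y $ j)) / sqrt (2 * pi * \<sigma>\<^sup>2)"
proof -
  have lam: "lam > 0" unfolding lam_def using assms by (simp add: add_pos_nonneg)
  define A where "A = (\<Sum>j\<in>S. (y$j)\<^sup>2)"
  have A: "A \<ge> 0" unfolding A_def by (simp add: sum_nonneg)
  have n2: "(norm u)\<^sup>2 = (\<Sum>j\<in>UNIV. (u $ j)\<^sup>2)" for u :: "real^'n"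
    by (subst power2_norm_eq_inner) (simp add: inner_vec_def power2_eq_square)
  have split: "(\<Sum>j\<in>UNIV. f j) = (\<Sum>j\<in>S. f j) + (\<Sum>j\<in>-S. f j)" for f :: "'n \<Rightarrow> real"
    using sum.If_cases[of UNIV "\<lambda>j. j \<in> S" f f] by (simp add: Int_def Compl_eq)
  have "(norm z)\<^sup>2 = (\<Sum>j\<in>S. (z$j)\<^sup>2) + (\<Sum>j\<in>-S. (z$j)\<^sup>2)"
    by (simp only: n2 split)
  also have "\<dots> = (\<Sum>j\<in>S. (y$j)\<^sup>2) / lam + (\<Sum>j\<in>-S. (y$j)\<^sup>2)"
    using lam by (simp add: z_def power_divide sum_divide_distrib)
  also have "\<dots> = (norm y)\<^sup>2 - A + A / lam"
    by (simp add: n2 split[of "\<lambda>j. (y$j)\<^sup>2"] A_def)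
  finally have nz: "(norm z)\<^sup>2 = (norm y)\<^sup>2 - A + A / lam" .
  have "coord_norm S z = sqrt A / sqrt lam"
    unfolding z_def coord_norm_rescale[OF real_sqrt_gt_zero[OF lam]] by (simp add: coord_norm_def A_def)
  then have cz: "(s * coord_norm S z / sqrt m)\<^sup>2 = s\<^sup>2 * A / (lam * m)"
    using lam \<open>m > 0\<close> A by (simp add: power_divide power_mult_distrib)
  have "A / lam + s\<^sup>2 * A / (lam * m) = A * (1 + s\<^sup>2 / m) / lam"
    using lam \<open>m > 0\<close> by (simp add: field_simps)
  also have "\<dots> = A" using lam unfolding lam_def by simp
  finally have "(norm z)\<^sup>2 + (s * coord_norm S z / sqrt m)\<^sup>2 = (norm y)\<^sup>2"
    by (simp add: nz cz)
  then have "- (norm z)\<^sup>2 / (2 * \<sigma>\<^sup>2) + - (s * coord_norm S z / sqrt m)\<^sup>2 / (2 * \<sigma>\<^sup>2)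
      = - (norm y)\<^sup>2 / (2 * \<sigma>\<^sup>2)"
    by (metis add_divide_distrib minus_add_distrib)
  then have E: "exp (- (norm y)\<^sup>2 / (2 * \<sigma>\<^sup>2))
      = exp (- (norm z)\<^sup>2 / (2 * \<sigma>\<^sup>2)) * exp (- (s * coord_norm S z / sqrt m)\<^sup>2 / (2 * \<sigma>\<^sup>2))"
    by (simp add: exp_add[symmetric])
  have nd: "normal_density 0 \<sigma> x = exp (- x\<^sup>2 / (2 * \<sigma>\<^sup>2)) / sqrt (2 * pi * \<sigma>\<^sup>2)" for x
    by (simp add: normal_density_def)
  show ?thesis
    unfolding prod_normal_density_eq_norm unfolding nd E by (simp add: mult_ac)
qed

lemma linear_shrink_coords: "linear (\<lambda>y::real^'n. \<chi> j. if j \<in> S then y$j / r else y$j)"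
  by (rule linearI) (simp_all add: vec_eq_iff add_divide_distrib)

lemma det_shrink_coords:
  "det (matrix (\<lambda>y::real^'n. \<chi> j. if j \<in> S then y$j / r else y$j)) = (1 / r) ^ card S"
proof -
  have "det (matrix (\<lambda>y::real^'n. \<chi> j. if j \<in> S then y$j / r else y$j))
      = (\<Prod>i\<in>UNIV. if i \<in> S then 1 / r else 1)"
    by (subst det_diagonal) (auto simp: matrix_def axis_def intro!: prod.cong)
  then show ?thesis by (simp add: prod.If_cases Int_def)
qed

lemma nn_integral_error_law_t_kernel:
  fixes S :: "'n::finite set" and s :: real
  assumes "S \<noteq> {}"
  defines "m \<equiv> real (card S)"
  shows "(\<integral>\<^sup>+y. ennreal (normal_density 0 \<sigma> (s * coord_norm S y / sqrt m) * (coord_norm S y / sqrt m))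
           \<partial>error_law \<sigma>)
       = ennreal ((1 + s\<^sup>2 / m) powr (- (m + 1) / 2)) *
         (\<integral>\<^sup>+y. ennreal (coord_norm S y / sqrt m / sqrt (2 * pi * \<sigma>\<^sup>2)) \<partial>error_law \<sigma>)"
proof -
  define lam where "lam = 1 + s\<^sup>2 / m"
  define c where "c = 1 / sqrt (2 * pi * \<sigma>\<^sup>2)"
  have m: "m > 0" unfolding m_def using assms by (simp add: card_gt_0_iff)
  have lam: "lam > 0" unfolding lam_def using m by (simp add: add_pos_nonneg)
  let ?G = "\<lambda>u::real^'n. ennreal (\<Prod>j\<in>UNIV. normal_density 0 \<sigma> (u $ j))"
  define D where "D y = (\<chi> j. if j \<in> S then y$j / sqrt lam else y$j)" for y :: "real^'n"
  note lin = linear_shrink_coords[of S "sqrt lam", folded D_def]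
  note detD = det_shrink_coords[of S "sqrt lam", folded D_def]
  define q where "q y = ?G y * ennreal (normal_density 0 \<sigma> (s * coord_norm S y / sqrt m) * (coord_norm S y / sqrt m))"
    for y
  have [measurable]: "q \<in> borel_measurable borel" unfolding q_def by measurable
  have qD: "q (D y) = ?G y * ennreal (c * (coord_norm S y / sqrt m)) * ennreal (1 / sqrt lam)" for y
  proof -
    have "(\<Prod>j\<in>UNIV. normal_density 0 \<sigma> (D y $ j)) * normal_density 0 \<sigma> (s * coord_norm S (D y) / sqrt m)
        = (\<Prod>j\<in>UNIV. normal_density 0 \<sigma> (y $ j)) * c"
      using prod_normal_density_shrink[OF m, where y=y and S=S and s=s and \<sigma>=\<sigma>]
      unfolding D_def lam_def c_def by simp
    moreover have "coord_norm S (D y) = coord_norm S y / sqrt lam"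
      unfolding D_def using lam by (simp add: coord_norm_rescale)
    ultimately show ?thesis
      unfolding q_def using lam
      by (simp add: ennreal_mult'[symmetric] ennreal_mult[symmetric] prod_nonneg coord_norm_nonneg c_def mult_ac)
  qed
  have "(\<integral>\<^sup>+y. ennreal (normal_density 0 \<sigma> (s * coord_norm S y / sqrt m) * (coord_norm S y / sqrt m))
        \<partial>error_law \<sigma>) = (\<integral>\<^sup>+y. q y \<partial>lborel)"
    unfolding error_law_def q_def by (rule nn_integral_density) simp_all
  also have "\<dots> = (\<integral>\<^sup>+y. q (D y) \<partial>lborel) * ennreal \<bar>det (matrix D)\<bar>"
    using lam by (intro nn_integral_linear_change_of_vars[OF lin, symmetric]) (simp_all add: detD)
  also have "\<dots> = (\<integral>\<^sup>+y. ?G y * ennreal (c * (coord_norm S y / sqrt m)) * ennreal (1 / sqrt lam) \<partial>lborel)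
      * ennreal ((1 / sqrt lam) ^ card S)"
    using lam by (simp add: qD detD)
  also have "\<dots> = (\<integral>\<^sup>+y. ?G y * ennreal (c * (coord_norm S y / sqrt m)) \<partial>lborel)
      * (ennreal (1 / sqrt lam) * ennreal ((1 / sqrt lam) ^ card S))"
    by (subst nn_integral_multc) (simp_all add: mult.assoc)
  also have "ennreal (1 / sqrt lam) * ennreal ((1 / sqrt lam) ^ card S) = ennreal (lam powr (- (m + 1) / 2))"
  proof -
    have "1 / sqrt lam * (1 / sqrt lam) ^ card S = (lam powr (- (1/2))) ^ (card S + 1)"
      using lam by (simp add: powr_minus_divide powr_half_sqrt)
    also have "\<dots> = lam powr (real (card S + 1) * (- (1/2)))"
      using lam by (subst powr_power) simp_all
    also have "real (card S + 1) * (- (1/2)) = - (m + 1) / 2"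
      by (simp add: m_def field_simps)
    finally show ?thesis using lam by (simp add: ennreal_mult[symmetric])
  qed
  also have "(\<integral>\<^sup>+y. ?G y * ennreal (c * (coord_norm S y / sqrt m)) \<partial>lborel)
      = (\<integral>\<^sup>+y. ennreal (coord_norm S y / sqrt m / sqrt (2 * pi * \<sigma>\<^sup>2)) \<partial>error_law \<sigma>)"
    unfolding error_law_def c_def by (subst nn_integral_density) (simp_all add: mult.commute)
  finally show ?thesis by (simp add: lam_def mult.commute)
qed

lemma nn_integral_Gamma_integrand_scaled:
  fixes a L :: real assumes a: "a > 0" and L: "L > 0"
  shows "(\<integral>\<^sup>+t. ennreal (indicator {0..} t * t powr (a - 1) / exp (L * t)) \<partial>lborel)
         = ennreal (Gamma a * L powr (-a))"
proof -
  let ?f = "\<lambda>u::real. ennreal (indicator {0..} u * u powr (a - 1) / exp u)"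
  let ?X = "(\<integral>\<^sup>+t. ennreal (indicator {0..} t * t powr (a - 1) / exp (L * t)) \<partial>lborel)"
  have fm: "?f \<in> borel_measurable borel" by measurable
  have "ennreal (Gamma a) = (\<integral>\<^sup>+u. ?f u \<partial>lborel)"
    using Gamma_conv_nn_integral_real[OF a] by simp
  also have "\<dots> = ennreal \<bar>L\<bar> * (\<integral>\<^sup>+t. ?f (0 + L * t) \<partial>lborel)"
    by (rule nn_integral_real_affine[OF fm]) (use L in simp)
  also have "(\<integral>\<^sup>+t. ?f (0 + L * t) \<partial>lborel)
      = (\<integral>\<^sup>+t. ennreal (L powr (a - 1)) * ennreal (indicator {0..} t * t powr (a - 1) / exp (L * t)) \<partial>lborel)"
  proof (rule nn_integral_cong)
    fix t :: real
    show "?f (0 + L * t) = ennreal (L powr (a - 1)) * ennreal (indicator {0..} t * t powr (a - 1) / exp (L * t))"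
    proof (cases "t \<ge> 0")
      case True
      then have "(L * t) powr (a - 1) = L powr (a - 1) * t powr (a - 1)"
        using L by (simp add: powr_mult)
      with True L show ?thesis
        by (simp add: ennreal_mult'[symmetric] zero_le_mult_iff mult_ac)
    next
      case False
      with L have "\<not> 0 \<le> L * t" by (simp add: zero_le_mult_iff)
      with False show ?thesis by (simp add: indicator_def)
    qed
  qed
  also have "\<dots> = ennreal (L powr (a - 1)) * ?X"
    by (rule nn_integral_cmult) measurable
  finally have eq: "ennreal (Gamma a) = ennreal L * (ennreal (L powr (a - 1)) * ?X)"
    using L by simp
  have e1: "ennreal (L powr (-a) * L * L powr (a - 1)) = ennreal (L powr (-a)) * ennreal L * ennreal (L powr (a - 1))"
    using L by (simp add: ennreal_mult)
  have e2: "L powr (-a) * L * L powr (a - 1) = 1"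
    using L by (simp add: powr_minus_divide powr_diff field_simps)
  have "ennreal (L powr (-a)) * ennreal (Gamma a) = (ennreal (L powr (-a)) * ennreal L * ennreal (L powr (a - 1))) * ?X"
    by (simp add: eq mult_ac)
  also have "\<dots> = ?X" by (simp only: e1[symmetric] e2 ennreal_1 mult_1)
  finally have "?X = ennreal (L powr (-a)) * ennreal (Gamma a)" by simp
  also have "\<dots> = ennreal (Gamma a * L powr (-a))"
    using L a by (simp add: ennreal_mult mult.commute)
  finally show ?thesis .
qed

lemma nn_integral_exp_neg_quadratic:
  fixes t m :: real assumes t: "t > 0" and m: "m > 0"
  shows "(\<integral>\<^sup>+s. ennreal (exp (- (t * s\<^sup>2 / m))) \<partial>lborel) = ennreal (sqrt (pi * m / t))"
proof -
  define \<sigma> where "\<sigma> = sqrt (m / (2 * t))"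
  have s2: "\<sigma>\<^sup>2 = m / (2 * t)" unfolding \<sigma>_def using t m by simp
  have nd: "normal_density 0 \<sigma> s = 1 / sqrt (pi * m / t) * exp (- (t * s\<^sup>2 / m))" for s
  proof -
    have "2 * pi * \<sigma>\<^sup>2 = pi * m / t" using t by (simp add: s2)
    moreover have "s\<^sup>2 / (2 * \<sigma>\<^sup>2) = t * s\<^sup>2 / m" using t m by (simp add: s2 field_simps)
    ultimately show ?thesis by (simp add: normal_density_def)
  qed
  have one: "(\<integral>\<^sup>+s. ennreal (normal_density 0 \<sigma> s) \<partial>lborel) = 1"
  proof -
    have sp: "\<sigma> > 0" unfolding \<sigma>_def using t m by simp
    show ?thesis using sp by (subst nn_integral_eq_integral) (simp_all add: integrable_normal_density integral_normal_density)
  qed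
  have pos: "sqrt (pi * m / t) > 0" using t m by (intro real_sqrt_gt_zero divide_pos_pos mult_pos_pos pi_gt_zero)
  have "(\<integral>\<^sup>+s. ennreal (exp (- (t * s\<^sup>2 / m))) \<partial>lborel)
      = (\<integral>\<^sup>+s. ennreal (sqrt (pi * m / t)) * ennreal (normal_density 0 \<sigma> s) \<partial>lborel)"
    using pos t m by (intro nn_integral_cong) (simp add: nd ennreal_mult'[symmetric])
  also have "\<dots> = ennreal (sqrt (pi * m / t))"
    by (subst nn_integral_cmult) (simp_all add: one)
  finally show ?thesis .
qed

lemma nn_integral_Gamma_integrand_times_gaussian:
  fixes t m :: real assumes m: "m > 0"
  shows "(\<integral>\<^sup>+s. ennreal (indicator {0..} t * t powr ((m + 1) / 2 - 1) / exp ((1 + s\<^sup>2 / m) * t)) \<partial>lborel)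
       = ennreal (sqrt (pi * m)) * ennreal (indicator {0..} t * t powr (m / 2 - 1) / exp t)"
proof (cases "t > 0")
  case True
  have "exp ((1 + s\<^sup>2 / m) * t) = exp t * exp (t * s\<^sup>2 / m)" for s
    by (simp add: exp_add[symmetric] algebra_simps)
  then have "ennreal (indicator {0..} t * t powr ((m + 1) / 2 - 1) / exp ((1 + s\<^sup>2 / m) * t))
      = ennreal (t powr ((m + 1) / 2 - 1) / exp t) * ennreal (exp (- (t * s\<^sup>2 / m)))" for s
    using True by (simp add: ennreal_mult'[symmetric] exp_minus field_simps)
  then have "(\<integral>\<^sup>+s. ennreal (indicator {0..} t * t powr ((m + 1) / 2 - 1) / exp ((1 + s\<^sup>2 / m) * t)) \<partial>lborel)
      = ennreal (t powr ((m + 1) / 2 - 1) / exp t) * ennreal (sqrt (pi * m / t))"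
    using True m by (simp add: nn_integral_cmult nn_integral_exp_neg_quadratic)
  also have "t powr ((m + 1) / 2 - 1) * sqrt (pi * m / t) = sqrt (pi * m) * t powr (m / 2 - 1)"
  proof -
    have "sqrt (pi * m / t) = sqrt (pi * m) * t powr (- (1/2))"
      using True m by (simp add: real_sqrt_divide powr_minus_divide powr_half_sqrt)
    moreover have "t powr ((m + 1) / 2 - 1) * t powr (- (1/2)) = t powr ((m + 1) / 2 - 1 + - (1/2))"
      by (rule powr_add[symmetric])
    moreover have "(m + 1) / 2 - 1 + - (1/2) = m / 2 - 1"
      by (simp add: field_simps)
    ultimately show ?thesis by (simp add: mult_ac)
  qed
  ultimately show ?thesis
    using True m by (simp add: ennreal_mult'[symmetric] mult_ac)
next
  case False
  then show ?thesis by (auto simp: indicator_def)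
qed

lemma nn_integral_student_t_kernel:
  fixes m :: real assumes m: "m > 0"
  shows "(\<integral>\<^sup>+s. ennreal ((1 + s\<^sup>2 / m) powr (- (m + 1) / 2)) \<partial>lborel)
       = ennreal (sqrt (m * pi) * Gamma (m / 2) / Gamma ((m + 1) / 2))"
proof -
  define a where "a = (m + 1) / 2"
  have a0: "a > 0" unfolding a_def using m by simp
  have Ga: "Gamma a > 0" using a0 by simp
  define F where "F s t = ennreal (indicator {0..} t * t powr (a - 1) / exp ((1 + s\<^sup>2 / m) * t))" for s t :: real
  have Fm: "case_prod F \<in> borel_measurable (lborel \<Otimes>\<^sub>M lborel)" unfolding F_def by measurable
  have "ennreal ((1 + s\<^sup>2 / m) powr (- (m + 1) / 2)) = ennreal (1 / Gamma a) * (\<integral>\<^sup>+t. F s t \<partial>lborel)" for s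
  proof -
    have "1 + s\<^sup>2 / m > 0" using m by (simp add: add_pos_nonneg)
    from nn_integral_Gamma_integrand_scaled[OF a0 this] Ga show ?thesis
      unfolding F_def by (simp add: ennreal_mult'[symmetric] a_def minus_divide_left)
  qed
  then have "(\<integral>\<^sup>+s. ennreal ((1 + s\<^sup>2 / m) powr (- (m + 1) / 2)) \<partial>lborel)
      = (\<integral>\<^sup>+s. ennreal (1 / Gamma a) * (\<integral>\<^sup>+t. F s t \<partial>lborel) \<partial>lborel)"
    by simp
  also have "\<dots> = ennreal (1 / Gamma a) * (\<integral>\<^sup>+s. (\<integral>\<^sup>+t. F s t \<partial>lborel) \<partial>lborel)"
    by (rule nn_integral_cmult) (use Fm in measurable)
  also have "(\<integral>\<^sup>+s. (\<integral>\<^sup>+t. F s t \<partial>lborel) \<partial>lborel) = (\<integral>\<^sup>+t. (\<integral>\<^sup>+s. F s t \<partial>lborel) \<partial>lborel)"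
    by (rule lborel_pair.Fubini'[OF Fm, symmetric])
  also have "\<dots> = (\<integral>\<^sup>+t. ennreal (sqrt (pi * m)) * ennreal (indicator {0..} t * t powr (m / 2 - 1) / exp t) \<partial>lborel)"
    unfolding F_def a_def by (intro nn_integral_cong nn_integral_Gamma_integrand_times_gaussian[OF m])
  also have "\<dots> = ennreal (sqrt (pi * m)) * ennreal (Gamma (m / 2))"
    by (subst nn_integral_cmult) (simp_all add: Gamma_conv_nn_integral_real[of "m/2"] m)
  finally show ?thesis
    using Ga m by (simp add: ennreal_mult'[symmetric] a_def mult_ac)
qed

lemma nn_integral_normal_measure_le_scaled:
  fixes r x :: real
  assumes r: "r > 0"
  shows "(\<integral>\<^sup>+t. (if t \<le> r * x then 1 else 0 :: ennreal) \<partial>normal_measure \<sigma>)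
       = (\<integral>\<^sup>+s. indicator {..x} s * ennreal (normal_density 0 \<sigma> (r * s) * r) \<partial>lborel)"
proof -
  let ?F = "\<lambda>t. (if t \<le> r * x then 1 else 0 :: ennreal)"
  have "(\<integral>\<^sup>+t. ?F t \<partial>normal_measure \<sigma>) = (\<integral>\<^sup>+t. ennreal (normal_density 0 \<sigma> t) * ?F t \<partial>lborel)"
    by (rule nn_integral_density) simp_all
  also have "\<dots> = ennreal \<bar>r\<bar> * (\<integral>\<^sup>+s. ennreal (normal_density 0 \<sigma> (0 + r * s)) * ?F (0 + r * s) \<partial>lborel)"
    by (rule nn_integral_real_affine) (use r in simp_all)
  also have "\<dots> = (\<integral>\<^sup>+s. ennreal r * (ennreal (normal_density 0 \<sigma> (r * s)) * ?F (r * s)) \<partial>lborel)"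
    using r by (subst nn_integral_cmult) simp_all
  also have "\<dots> = (\<integral>\<^sup>+s. indicator {..x} s * ennreal (normal_density 0 \<sigma> (r * s) * r) \<partial>lborel)"
    using r by (intro nn_integral_cong)
      (simp add: indicator_def mult_le_cancel_left_pos ennreal_mult mult.commute)
  finally show ?thesis .
qed

lemma emeasure_error_law_t_ratio_le:
  fixes S :: "'n::finite set" and k :: 'n and x :: real
  assumes \<sigma>: "0 < \<sigma>" and S: "S \<noteq> {}" "k \<notin> S"
  defines "m \<equiv> real (card S)"
  shows "emeasure (error_law \<sigma>) {y. y$k \<le> x * coord_norm S y / sqrt m}
       = (\<integral>\<^sup>+y. ennreal (coord_norm S y / sqrt m / sqrt (2 * pi * \<sigma>\<^sup>2)) \<partial>error_law \<sigma>) *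
         (\<integral>\<^sup>+s. indicator {..x} s * ennreal ((1 + s\<^sup>2 / m) powr (- (m + 1) / 2)) \<partial>lborel)"
proof -
  have m: "m > 0" unfolding m_def using S by (simp add: card_gt_0_iff)
  define F where "F t y = (if t \<le> x * coord_norm S y / sqrt m then 1 else 0 :: ennreal)"
    for t and y :: "real^'n"
  define G where "G s y = ennreal (normal_density 0 \<sigma> (s * coord_norm S y / sqrt m) * (coord_norm S y / sqrt m))"
    for s and y :: "real^'n"
  have F_indep: "F t (\<chi> j. if j = k then s else y$j) = F t y" for t s y
  proof -
    have "coord_norm S (\<chi> j. if j = k then s else y$j) = coord_norm S y"
      unfolding coord_norm_def using S by (intro arg_cong[where f=sqrt] sum.cong) auto
    then show ?thesis by (simp add: F_def)
  qed
  have G_inner: "(\<integral>\<^sup>+t. F t y \<partial>normal_measure \<sigma>) = (\<integral>\<^sup>+s. indicator {..x} s * G s y \<partial>lborel)"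
    if "coord_norm S y > 0" for y
    using nn_integral_normal_measure_le_scaled[where r="coord_norm S y / sqrt m" and x=x and \<sigma>=\<sigma>] that m
    by (simp add: F_def G_def mult_ac)
  have "emeasure (error_law \<sigma>) {y. y$k \<le> x * coord_norm S y / sqrt m} = (\<integral>\<^sup>+y. F (y$k) y \<partial>error_law \<sigma>)"
  proof -
    have "{y::real^'n. y$k \<le> x * coord_norm S y / sqrt m} \<in> sets (error_law \<sigma>)" by simp
    then have "emeasure (error_law \<sigma>) {y. y$k \<le> x * coord_norm S y / sqrt m}
        = (\<integral>\<^sup>+y. indicator {y::real^'n. y$k \<le> x * coord_norm S y / sqrt m} y \<partial>error_law \<sigma>)"
      by (rule nn_integral_indicator[symmetric])
    also have "\<dots> = (\<integral>\<^sup>+y. F (y$k) y \<partial>error_law \<sigma>)"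
      by (intro nn_integral_cong) (simp add: F_def indicator_def)
    finally show ?thesis .
  qed
  also have "\<dots> = (\<integral>\<^sup>+y. (\<integral>\<^sup>+t. F t y \<partial>normal_measure \<sigma>) \<partial>error_law \<sigma>)"
    by (rule nn_integral_error_law_coordinate[OF \<sigma> _ F_indep]) (unfold F_def, measurable)
  also have "\<dots> = (\<integral>\<^sup>+y. (\<integral>\<^sup>+s. indicator {..x} s * G s y \<partial>lborel) \<partial>error_law \<sigma>)"
    using AE_error_law_coord_norm_pos[OF \<sigma> S(1)] by (intro nn_integral_cong_AE) (auto simp: G_inner)
  also have "\<dots> = (\<integral>\<^sup>+s. (\<integral>\<^sup>+y. indicator {..x} s * G s y \<partial>error_law \<sigma>) \<partial>lborel)"
  proof -
    interpret prob_space "error_law \<sigma> :: (real^'n) measure" by (rule prob_space_error_law[OF \<sigma>])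
    interpret pair_sigma_finite lborel "error_law \<sigma> :: (real^'n) measure" ..
    show ?thesis by (rule Fubini') (simp add: G_def)
  qed
  also have "\<dots> = (\<integral>\<^sup>+s. indicator {..x} s * ennreal ((1 + s\<^sup>2 / m) powr (- (m + 1) / 2)) *
      (\<integral>\<^sup>+y. ennreal (coord_norm S y / sqrt m / sqrt (2 * pi * \<sigma>\<^sup>2)) \<partial>error_law \<sigma>) \<partial>lborel)"
  proof (rule nn_integral_cong)
    fix s :: real
    have "(\<integral>\<^sup>+y. indicator {..x} s * G s y \<partial>error_law \<sigma>) = indicator {..x} s * (\<integral>\<^sup>+y. G s y \<partial>error_law \<sigma>)"
      by (rule nn_integral_cmult) (simp add: G_def)
    then show "(\<integral>\<^sup>+y. indicator {..x} s * G s y \<partial>error_law \<sigma>)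
        = indicator {..x} s * ennreal ((1 + s\<^sup>2 / m) powr (- (m + 1) / 2)) *
          (\<integral>\<^sup>+y. ennreal (coord_norm S y / sqrt m / sqrt (2 * pi * \<sigma>\<^sup>2)) \<partial>error_law \<sigma>)"
      unfolding G_def m_def nn_integral_error_law_t_kernel[OF S(1)] by (simp add: mult.assoc)
  qed
  finally show ?thesis
    by (subst (asm) nn_integral_multc) (simp_all add: mult.commute)
qed

lemma SUP_nn_integral_indicator_atMost:
  fixes f :: "real \<Rightarrow> ennreal"
  assumes [measurable]: "f \<in> borel_measurable borel"
  shows "(SUP n. (\<integral>\<^sup>+s. indicator {..real n} s * f s \<partial>lborel)) = (\<integral>\<^sup>+s. f s \<partial>lborel)"
proof -
  have "(SUP n. (\<integral>\<^sup>+s. indicator {..real n} s * f s \<partial>lborel))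
      = (\<integral>\<^sup>+s. (SUP n. indicator {..real n} s * f s) \<partial>lborel)"
    by (rule nn_integral_monotone_convergence_SUP[symmetric])
       (auto intro!: incseq_SucI simp: le_fun_def indicator_def)
  also have "\<dots> = (\<integral>\<^sup>+s. f s \<partial>lborel)"
  proof (intro nn_integral_cong antisym)
    fix s :: real
    show "(SUP n. indicator {..real n} s * f s) \<le> f s"
      by (rule SUP_least) (simp add: indicator_def)
    obtain n :: nat where "s \<le> real n" using real_arch_simple by blast
    then show "f s \<le> (SUP n. indicator {..real n} s * f s)"
      by (intro SUP_upper2[of n]) simp_all
  qed
  finally show ?thesis .
qed

lemma SUP_emeasure_error_law_t_ratio_le:
  fixes S :: "'n::finite set" and k :: 'n and c :: real
  assumes \<sigma>: "0 < \<sigma>" and S: "S \<noteq> {}" and c: "c > 0"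
  shows "(SUP n. emeasure (error_law \<sigma>) {y. y$k \<le> real n * coord_norm S y / c}) = 1"
proof -
  interpret prob_space "error_law \<sigma> :: (real^'n) measure" by (rule prob_space_error_law[OF \<sigma>])
  define A where "A x = {y::real^'n. y$k \<le> x * coord_norm S y / c}" for x :: real
  have "A (real n) \<subseteq> A (real (Suc n))" for n
  proof
    fix y assume "y \<in> A (real n)"
    moreover have "real n * coord_norm S y / c \<le> real (Suc n) * coord_norm S y / c"
      using c coord_norm_nonneg[of S y] by (intro divide_right_mono mult_right_mono) simp_all
    ultimately show "y \<in> A (real (Suc n))" unfolding A_def by simp
  qed
  then have "incseq (\<lambda>n. A (real n))" by (rule incseq_SucI)
  then have "(SUP n. emeasure (error_law \<sigma>) (A (real n))) = emeasure (error_law \<sigma>) (\<Union>n. A (real n))"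
    by (intro SUP_emeasure_incseq) (auto simp: A_def)
  also have "\<dots> = 1"
  proof (rule emeasure_eq_1_AE)
    show "AE y in error_law \<sigma>. y \<in> (\<Union>n. A (real n))"
      using AE_error_law_coord_norm_pos[OF \<sigma> S]
    proof eventually_elim
      fix y :: "real^'n" assume R: "coord_norm S y > 0"
      obtain n :: nat where "y$k * c / coord_norm S y \<le> real n" using real_arch_simple by blast
      then have "y$k \<le> real n * coord_norm S y / c" using R c by (simp add: field_simps)
      then show "y \<in> (\<Union>n. A (real n))" unfolding A_def by auto
    qed
  qed (auto simp: A_def)
  finally show ?thesis unfolding A_def .
qed

text \<open>The normalising constant is not computed directly: letting \<open>x \<rightarrow> \<infinity>\<close> in the previous lemma,
  the left-hand side tends to \<open>1\<close>, which determines it.\<close>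

lemma nn_integral_error_law_coord_norm:
  fixes S :: "'n::finite set" and k :: 'n
  assumes \<sigma>: "0 < \<sigma>" and S: "S \<noteq> {}" "k \<notin> S"
  defines "m \<equiv> real (card S)"
  shows "(\<integral>\<^sup>+y. ennreal (coord_norm S y / sqrt m / sqrt (2 * pi * \<sigma>\<^sup>2)) \<partial>error_law \<sigma>)
       = ennreal (Gamma ((m + 1) / 2) / (sqrt (m * pi) * Gamma (m / 2)))"
proof -
  have m: "m > 0" unfolding m_def using S by (simp add: card_gt_0_iff)
  define K where "K = (\<integral>\<^sup>+y. ennreal (coord_norm S y / sqrt m / sqrt (2 * pi * \<sigma>\<^sup>2)) \<partial>error_law \<sigma>)"
  define h where "h s = ennreal ((1 + s\<^sup>2 / m) powr (- (m + 1) / 2))" for s :: real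
  define B where "B = sqrt (m * pi) * Gamma (m / 2) / Gamma ((m + 1) / 2)"
  have B: "B > 0" unfolding B_def using m by (simp add: divide_pos_pos)
  have "(SUP n. (\<integral>\<^sup>+s. indicator {..real n} s * h s \<partial>lborel)) = ennreal B"
    unfolding B_def h_def nn_integral_student_t_kernel[OF m, symmetric]
    by (rule SUP_nn_integral_indicator_atMost) simp
  then have "K * ennreal B = K * (SUP n. (\<integral>\<^sup>+s. indicator {..real n} s * h s \<partial>lborel))"
    by simp
  also have "\<dots> = (SUP n. emeasure (error_law \<sigma>) {y. y$k \<le> real n * coord_norm S y / sqrt m})"
    unfolding K_def h_def m_def
    by (simp add: SUP_mult_left_ennreal[symmetric] emeasure_error_law_t_ratio_le[OF \<sigma> S])
  also have "\<dots> = 1"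
    using m by (intro SUP_emeasure_error_law_t_ratio_le[OF \<sigma> S(1)]) simp
  finally have KB: "K * ennreal B = 1" .
  have "ennreal B * ennreal (1 / B) = 1" using B by (simp add: ennreal_mult[symmetric])
  then have "K = (K * ennreal B) * ennreal (1 / B)" by (simp add: mult.assoc)
  then have "K = ennreal (1 / B)" by (simp only: KB mult_1)
  then show ?thesis unfolding K_def B_def by simp
qed

lemma student_t_cdf_eq_nn_integral:
  fixes m :: nat assumes "m > 0"
  shows "student_t_cdf m x
       = Gamma ((real m + 1) / 2) / (sqrt (real m * pi) * Gamma (real m / 2)) *
         enn2real (\<integral>\<^sup>+s. indicator {..x} s * ennreal ((1 + s\<^sup>2 / real m) powr (- (real m + 1) / 2)) \<partial>lborel)"
proof -
  define c where "c = Gamma ((real m + 1) / 2) / (sqrt (real m * pi) * Gamma (real m / 2))"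
  have c: "c > 0" unfolding c_def using assms by (simp add: divide_pos_pos)
  have dens: "student_t_density m t = c * (1 + t\<^sup>2 / real m) powr (- (real m + 1) / 2)" for t
    unfolding student_t_density_def c_def by (simp add: real_sqrt_mult)
  have "student_t_cdf m x = enn2real (\<integral>\<^sup>+t. ennreal (indicator {..x} t *\<^sub>R student_t_density m t) \<partial>lborel)"
    unfolding student_t_cdf_def set_lebesgue_integral_def
    using c by (intro integral_eq_nn_integral) (auto simp: dens intro!: AE_I2)
  also have "(\<integral>\<^sup>+t. ennreal (indicator {..x} t *\<^sub>R student_t_density m t) \<partial>lborel)
      = ennreal c * (\<integral>\<^sup>+t. indicator {..x} t * ennreal ((1 + t\<^sup>2 / real m) powr (- (real m + 1) / 2)) \<partial>lborel)"
    using c by (subst nn_integral_cmult[symmetric])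
      (auto intro!: nn_integral_cong simp: dens indicator_def ennreal_mult)
  finally show ?thesis using c by (simp add: enn2real_mult c_def)
qed

lemma measure_error_law_t_ratio_le:
  fixes S :: "'n::finite set" and k :: 'n
  assumes "0 < \<sigma>" and "S \<noteq> {}" and "k \<notin> S"
  shows "measure (error_law \<sigma>) {y. y$k \<le> x * coord_norm S y / sqrt (card S)} = student_t_cdf (card S) x"
proof -
  let ?m = "real (card S)"
  let ?c = "Gamma ((?m + 1) / 2) / (sqrt (?m * pi) * Gamma (?m / 2))"
  let ?J = "\<integral>\<^sup>+s. indicator {..x} s * ennreal ((1 + s\<^sup>2 / ?m) powr (- (?m + 1) / 2)) \<partial>lborel"
  have "emeasure (error_law \<sigma>) {y. y$k \<le> x * coord_norm S y / sqrt ?m} = ennreal ?c * ?J"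
    unfolding emeasure_error_law_t_ratio_le[OF assms] nn_integral_error_law_coord_norm[OF assms] ..
  then show ?thesis
    using assms by (simp add: measure_def enn2real_mult student_t_cdf_eq_nn_integral card_gt_0_iff)
qed

section \<open>Orthonormal frames\<close>

lemma orthonormal_set_indexing:
  fixes B :: "(real^'n) set"
  assumes "finite B" and "card B = CARD('n)" and "\<And>x. x \<in> B \<Longrightarrow> norm x = 1"
    and "pairwise orthogonal B"
  obtains b :: "'n \<Rightarrow> real^'n" where "bij_betw b UNIV B" and "\<And>j l. b j \<bullet> b l = (if j = l then 1 else 0)"
proof -
  obtain b where b: "bij_betw b (UNIV :: 'n set) B"
    using finite_same_card_bij[of "UNIV :: 'n set" B] assms(1,2) by auto
  show thesis
  proof (rule that[OF b])
    fix j l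
    have B: "b j \<in> B" "b l \<in> B" using b by (auto simp: bij_betw_def)
    show "b j \<bullet> b l = (if j = l then 1 else 0)"
    proof (cases "j = l")
      case True then show ?thesis using B assms(3) by (simp add: dot_square_norm)
    next
      case False
      then have "b j \<noteq> b l" using b by (auto simp: bij_betw_def dest: injD)
      with False B assms(4) show ?thesis by (simp add: pairwise_def orthogonal_def)
    qed
  qed
qed

lemma orthonormal_basis_orthogonal_complement:
  fixes W :: "(real^'n) set"
  assumes "subspace W"
  obtains BZ where "finite BZ" "pairwise orthogonal BZ" "\<And>x. x \<in> BZ \<Longrightarrow> norm x = 1"
    "\<And>z x. z \<in> BZ \<Longrightarrow> x \<in> W \<Longrightarrow> x \<bullet> z = 0" "card BZ + dim W = CARD('n)"
proof -
  define Z where "Z = {z. \<forall>x\<in>W. orthogonal x z}"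
  obtain BZ where BZ: "BZ \<subseteq> Z" "pairwise orthogonal BZ" "\<And>x. x \<in> BZ \<Longrightarrow> norm x = 1"
      "independent BZ" "card BZ = dim Z"
    using orthonormal_basis_subspace[OF subspace_orthogonal_to_vectors[of W]] Z_def by metis
  have "dim Z + dim W = CARD('n)"
    using dim_subspace_orthogonal_to_vectors[OF assms subspace_UNIV] unfolding Z_def by simp
  with BZ show thesis
    by (intro that) (auto simp: independent_imp_finite Z_def orthogonal_def)
qed

lemma orthonormal_frame_adapted:
  fixes V :: "(real^'n) set" and e :: "real^'n"
  assumes V: "subspace V" and e: "norm e = 1" and eV: "\<And>v. v \<in> V \<Longrightarrow> e \<bullet> v = 0"
  obtains b :: "'n \<Rightarrow> real^'n" and k S where
    "\<And>j l. b j \<bullet> b l = (if j = l then 1 else 0)"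
    "b k = e" "k \<notin> S" "card S = dim V"
    "\<And>j. j \<in> S \<Longrightarrow> b j \<in> V"
    "\<And>j v. j \<notin> S \<Longrightarrow> v \<in> V \<Longrightarrow> b j \<bullet> v = 0"
proof -
  obtain BV where BV: "BV \<subseteq> V" "pairwise orthogonal BV" "\<And>x. x \<in> BV \<Longrightarrow> norm x = 1"
      "independent BV" "card BV = dim V"
    using orthonormal_basis_subspace[OF V] by metis
  define W where "W = span (insert e V)"
  obtain BZ where BZ: "finite BZ" "pairwise orthogonal BZ" "\<And>x. x \<in> BZ \<Longrightarrow> norm x = 1"
      "\<And>z x. z \<in> BZ \<Longrightarrow> x \<in> W \<Longrightarrow> x \<bullet> z = 0" "card BZ + dim W = CARD('n)"
    using orthonormal_basis_orthogonal_complement[of W] unfolding W_def by (metis subspace_span)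
  have fin: "finite BV" "finite BZ" using BV(4) BZ(1) by (simp_all add: independent_imp_finite)
  have "e \<notin> V" using eV[of e] e by (auto simp: dot_square_norm)
  then have "e \<notin> span V" using V by (metis span_eq_iff)
  then have "dim W = dim V + 1"
    unfolding W_def by (simp add: dim_insert)
  then have dims: "card BV + card BZ + 1 = CARD('n)" using BV(5) BZ(5) by simp
  have eW: "e \<in> W" and VW: "V \<subseteq> W" unfolding W_def by (auto intro: span_base)
  have Zo: "x \<bullet> z = 0" "z \<bullet> x = 0" if "z \<in> BZ" "x \<in> W" for z x
    using BZ(4)[OF that] by (simp_all add: inner_commute)
  have BVo: "x \<bullet> v = 0" if "x \<in> BV" "v \<in> BV" "x \<noteq> v" for x v
    using BV(2) that unfolding pairwise_def orthogonal_def by auto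
  have BZo: "x \<bullet> z = 0" if "x \<in> BZ" "z \<in> BZ" "x \<noteq> z" for x z
    using BZ(2) that unfolding pairwise_def orthogonal_def by auto
  have disj: "e \<notin> BV" "e \<notin> BZ" "BV \<inter> BZ = {}"
    using \<open>e \<notin> V\<close> BV(1,3) e Zo eW VW by (force simp: dot_square_norm)+
  define B where "B = insert e (BV \<union> BZ)"
  have "finite B" and "card B = CARD('n)"
    using fin disj dims unfolding B_def by (simp_all add: card_Un_disjoint)
  moreover have "norm x = 1" if "x \<in> B" for x
    using that e BV(3) BZ(3) unfolding B_def by auto
  moreover have "pairwise orthogonal B"
  proof -
    have "v \<bullet> e = 0" if "v \<in> V" for v using eV[OF that] by (simp add: inner_commute)
    then show ?thesis
      unfolding pairwise_def orthogonal_def B_def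
      using BV(1) VW eW Zo BVo BZo eV by blast
  qed
  ultimately obtain b :: "'n \<Rightarrow> real^'n" where b: "bij_betw b UNIV B" and bo: "\<And>j l. b j \<bullet> b l = (if j = l then 1 else 0)"
    using orthonormal_set_indexing by blast
  obtain k where k: "b k = e" using b unfolding B_def bij_betw_def by (metis insertI1 rangeE)
  show thesis
  proof (rule that[OF bo k])
    show "k \<notin> b -` BV" using k disj by simp
    have "card (b -` BV) = card BV"
      using b unfolding B_def bij_betw_def by (intro card_vimage_inj) auto
    then show "card (b -` BV) = dim V" using BV(5) by simp
    show "b j \<in> V" if "j \<in> b -` BV" for j using that BV(1) by auto
    show "b j \<bullet> v = 0" if "j \<notin> b -` BV" "v \<in> V" for j v
    proof -
      have "b j \<in> B" using b by (auto simp: bij_betw_def)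
      then have "b j = e \<or> b j \<in> BZ" using that(1) unfolding B_def by auto
      then show ?thesis using eV[OF that(2)] Zo that(2) VW by auto
    qed
  qed
qed

lemma orthonormal_frame_sum_inner:
  fixes b :: "'n::finite \<Rightarrow> real^'n"
  assumes "\<And>j l. b j \<bullet> b l = (if j = l then 1 else 0)"
  shows "(\<Sum>j\<in>A. y$j *\<^sub>R b j) \<bullet> (\<Sum>j\<in>A. y$j *\<^sub>R b j) = (\<Sum>j\<in>A. (y$j)\<^sup>2)"
  by (simp add: inner_sum_left inner_sum_right assms if_distrib sum.delta power2_eq_square
      cong: if_cong)

lemma orthonormal_frame_map:
  fixes b :: "'n::finite \<Rightarrow> real^'n"
  assumes b: "\<And>j l. b j \<bullet> b l = (if j = l then 1 else 0)"
  defines "Q y \<equiv> \<Sum>j\<in>UNIV. y$j *\<^sub>R b j"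
  shows "orthogonal_transformation Q" and "b k \<bullet> Q y = y$k"
    and "Q y = (\<Sum>j\<in>S. y$j *\<^sub>R b j) + (\<Sum>j\<in>-S. y$j *\<^sub>R b j)"
    and "norm (\<Sum>j\<in>S. y$j *\<^sub>R b j) = coord_norm S y"
proof -
  have "linear Q" unfolding Q_def
    by (rule linearI) (simp_all add: scaleR_add_left sum.distrib scaleR_sum_right)
  moreover have "norm (Q v) = norm v" for v
  proof -
    have "(norm (Q v))\<^sup>2 = (\<Sum>j\<in>UNIV. (v$j)\<^sup>2)"
      unfolding power2_norm_eq_inner Q_def by (rule orthonormal_frame_sum_inner[OF b])
    also have "\<dots> = (norm v)\<^sup>2"
      by (subst power2_norm_eq_inner) (simp add: inner_vec_def power2_eq_square)
    finally show ?thesis by simp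
  qed
  ultimately show "orthogonal_transformation Q" by (simp add: orthogonal_transformation)
  show "b k \<bullet> Q y = y$k"
    unfolding Q_def by (simp add: inner_sum_right b if_distrib cong: if_cong)
  show "Q y = (\<Sum>j\<in>S. y$j *\<^sub>R b j) + (\<Sum>j\<in>-S. y$j *\<^sub>R b j)"
    unfolding Q_def using sum.If_cases[of UNIV "\<lambda>j. j \<in> S" "\<lambda>j. y$j *\<^sub>R b j" "\<lambda>j. y$j *\<^sub>R b j"]
    by (simp add: Int_def Compl_eq)
  show "norm (\<Sum>j\<in>S. y$j *\<^sub>R b j) = coord_norm S y"
    unfolding coord_norm_def norm_eq_sqrt_inner by (simp add: orthonormal_frame_sum_inner[OF b])
qed

section \<open>Least squares\<close>

lemma inner_matrix_vector_mult: "((M :: real^'a^'b) *v x) \<bullet> y = x \<bullet> (transpose M *v y)"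
  by (metis dot_lmul_matrix inner_commute transpose_matrix_vector)

lemma matrix_inv_inverse:
  fixes M :: "real^'n^'n" assumes "invertible M"
  shows "M ** matrix_inv M = mat 1" and "matrix_inv M ** M = mat 1"
proof -
  have "\<exists>A'. M ** A' = mat 1 \<and> A' ** M = mat 1" using assms by (simp add: invertible_def)
  then have "M ** matrix_inv M = mat 1 \<and> matrix_inv M ** M = mat 1"
    unfolding matrix_inv_def by (rule someI_ex)
  then show "M ** matrix_inv M = mat 1" and "matrix_inv M ** M = mat 1" by auto
qed

lemma matrix_inv_unique:
  fixes M B :: "real^'n^'n" assumes "M ** B = mat 1" "B ** M = mat 1"
  shows "matrix_inv M = B"
proof -
  have "invertible M" using assms unfolding invertible_def by blast
  have "matrix_inv M = matrix_inv M ** (M ** B)" using assms by simp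
  also have "\<dots> = B" using matrix_inv_inverse[OF \<open>invertible M\<close>] by (simp add: matrix_mul_assoc)
  finally show ?thesis .
qed

definition ls_map :: "real^'k^'n \<Rightarrow> real^'n^'k" where
  "ls_map X = matrix_inv (transpose X ** X) ** transpose X"

definition resid :: "real^'k^'n \<Rightarrow> real^'n \<Rightarrow> real^'n" where
  "resid X u = u - X *v (ls_map X *v u)"

definition col_space_orth :: "real^'k^'n \<Rightarrow> (real^'n) set" where
  "col_space_orth X = {v. transpose X *v v = 0}"

lemma theta_LS_eq_ls_map: "theta_LS X y = ls_map X *v y"
  by (simp add: theta_LS_def ls_map_def matrix_vector_mul_assoc del: transpose_matrix_vector)

lemma col_space_orth_inner: "v \<in> col_space_orth X \<Longrightarrow> (X *v c) \<bullet> v = 0"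
  by (simp add: inner_matrix_vector_mult col_space_orth_def del: transpose_matrix_vector)

lemma subspace_col_space_orth: "subspace (col_space_orth X)"
  unfolding col_space_orth_def subspace_def
  by (simp add: matrix_vector_right_distrib matrix_vector_mult_scaleR del: transpose_matrix_vector)

lemma ls_map_component: "(ls_map X *v u) $ i = row i (ls_map X) \<bullet> u"
  by (simp add: row_def inner_vec_def matrix_vector_mult_def)

context
  fixes X :: "real^'k^'n"
  assumes rank: "rank X = CARD('k)"
begin

lemma invertible_gram: "invertible (transpose X ** X)"
proof -
  have "inj ((*v) (transpose X ** X))"
  proof (rule injI)
    fix c d :: "real^'k" assume "(transpose X ** X) *v c = (transpose X ** X) *v d"
    then have z: "(transpose X ** X) *v (c - d) = 0" by (simp add: matrix_vector_mult_diff_distrib)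
    have "(X *v (c - d)) \<bullet> (X *v (c - d)) = (c - d) \<bullet> ((transpose X ** X) *v (c - d))"
      by (simp add: inner_matrix_vector_mult matrix_vector_mul_assoc del: transpose_matrix_vector)
    also have "\<dots> = 0" by (simp add: z)
    finally have "X *v c = X *v d" by (simp add: matrix_vector_mult_diff_distrib)
    then show "c = d" using rank by (simp add: full_rank_injective inj_eq)
  qed
  then obtain B where "B ** (transpose X ** X) = mat 1" using matrix_left_invertible_injective by blast
  then show ?thesis using invertible_left_inverse by blast
qed

lemma ls_map_left_inverse: "ls_map X ** X = mat 1"
  using matrix_inv_inverse(2)[OF invertible_gram] by (simp add: ls_map_def matrix_mul_assoc)

lemma theta_LS_model: "theta_LS X (X *v \<theta> + u) = \<theta> + ls_map X *v u"
  by (simp add: theta_LS_eq_ls_map matrix_vector_right_distrib matrix_vector_mul_assoc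
      ls_map_left_inverse)

lemma resid_model: "(X *v \<theta> + u) - X *v theta_LS X (X *v \<theta> + u) = resid X u"
  unfolding theta_LS_model resid_def by (simp add: matrix_vector_right_distrib)

lemma resid_in_col_space_orth: "resid X u \<in> col_space_orth X"
proof -
  have "transpose X *v (X *v (ls_map X *v u))
      = ((transpose X ** X) ** matrix_inv (transpose X ** X)) *v (transpose X *v u)"
    by (simp only: ls_map_def matrix_vector_mul_assoc matrix_mul_assoc)
  then have "transpose X *v (X *v (ls_map X *v u)) = transpose X *v u"
    by (simp add: matrix_inv_inverse(1)[OF invertible_gram] del: transpose_matrix_vector)
  then show ?thesis
    by (simp add: resid_def col_space_orth_def matrix_vector_mult_diff_distrib
        del: transpose_matrix_vector)
qed

lemma dim_col_space_orth: "dim (col_space_orth X) = CARD('n) - CARD('k)"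
proof -
  have eq: "{y \<in> UNIV. \<forall>x\<in>range ((*v) X). orthogonal x y} = col_space_orth X"
  proof safe
    fix y :: "real^'n" assume "\<forall>x\<in>range ((*v) X). orthogonal x y"
    then have "(X *v (transpose X *v y)) \<bullet> y = 0" by (auto simp: orthogonal_def)
    then have "(transpose X *v y) \<bullet> (transpose X *v y) = 0"
      by (simp add: inner_matrix_vector_mult del: transpose_matrix_vector)
    then show "y \<in> col_space_orth X" by (simp add: col_space_orth_def del: transpose_matrix_vector)
  qed (simp_all add: orthogonal_def col_space_orth_inner)
  have "dim {y \<in> UNIV. \<forall>x\<in>range ((*v) X). orthogonal x y} + dim (range ((*v) X)) = dim (UNIV :: (real^'n) set)"
    by (rule dim_subspace_orthogonal_to_vectors) (simp_all add: linear_subspace_image)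
  then show ?thesis unfolding eq using rank by (simp add: rank_dim_range)
qed

lemma resid_unique:
  assumes v: "v \<in> col_space_orth X" and orth: "\<And>z. z \<in> col_space_orth X \<Longrightarrow> (u - v) \<bullet> z = 0"
  shows "resid X u = v"
proof -
  have V: "subspace (col_space_orth X)" by (rule subspace_col_space_orth)
  define D where "D = resid X u - v"
  have DV: "D \<in> col_space_orth X"
    unfolding D_def by (rule subspace_diff[OF V resid_in_col_space_orth v])
  have "D = (u - v) - X *v (ls_map X *v u)" unfolding D_def resid_def by simp
  then have "D \<bullet> D = (u - v) \<bullet> D - (X *v (ls_map X *v u)) \<bullet> D" by (simp add: inner_diff_left)
  also have "\<dots> = 0" using orth[OF DV] col_space_orth_inner[OF DV] by simp
  finally show ?thesis unfolding D_def by simp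
qed

lemma transpose_matrix_inv_gram:
  "transpose (matrix_inv (transpose X ** X)) = matrix_inv (transpose X ** X)"
proof (rule matrix_inv_unique[symmetric])
  have "transpose (matrix_inv (transpose X ** X) ** (transpose X ** X)) = mat 1"
    by (simp add: matrix_inv_inverse(2)[OF invertible_gram] transpose_mat)
  then show "(transpose X ** X) ** transpose (matrix_inv (transpose X ** X)) = mat 1"
    by (simp add: matrix_transpose_mul)
  have "transpose ((transpose X ** X) ** matrix_inv (transpose X ** X)) = mat 1"
    by (simp add: matrix_inv_inverse(1)[OF invertible_gram] transpose_mat)
  then show "transpose (matrix_inv (transpose X ** X)) ** (transpose X ** X) = mat 1"
    by (simp add: matrix_transpose_mul matrix_mul_assoc)
qed

lemma row_ls_map_eq: "row i (ls_map X) = X *v (matrix_inv (transpose X ** X) *v axis i 1)"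
proof -
  let ?A = "matrix_inv (transpose X ** X)"
  have "?A $ i $ l = ?A $ l $ i" for l
    using arg_cong[OF transpose_matrix_inv_gram, of "\<lambda>M. M $ l $ i"] by (simp add: transpose_def)
  then have "row i ?A = ?A *v axis i 1"
    by (simp add: row_def vec_eq_iff matrix_vector_mult_def axis_def if_distrib cong: if_cong)
  moreover have "row i (ls_map X) = X *v row i ?A"
    by (simp add: row_def ls_map_def vec_eq_iff matrix_matrix_mult_def matrix_vector_mult_def
        transpose_def mult_ac)
  ultimately show ?thesis by simp
qed


lemma row_ls_map_orth: "v \<in> col_space_orth X \<Longrightarrow> row i (ls_map X) \<bullet> v = 0"
  by (simp add: row_ls_map_eq col_space_orth_inner)

lemma inner_row_ls_map: "row i (ls_map X) \<bullet> row i (ls_map X) = matrix_inv (transpose X ** X) $ i $ i"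
proof -
  define z where "z = matrix_inv (transpose X ** X) *v axis i 1"
  have "row i (ls_map X) \<bullet> row i (ls_map X) = z \<bullet> ((transpose X ** X) *v z)"
    by (simp add: row_ls_map_eq z_def[symmetric] inner_matrix_vector_mult matrix_vector_mul_assoc
        del: transpose_matrix_vector)
  also have "(transpose X ** X) *v z = axis i 1"
    by (simp add: z_def matrix_vector_mul_assoc matrix_inv_inverse(1)[OF invertible_gram])
  also have "z \<bullet> axis i 1 = z $ i" by (simp add: inner_axis)
  also have "\<dots> = matrix_inv (transpose X ** X) $ i $ i"
    by (simp add: z_def matrix_vector_mult_def axis_def if_distrib cong: if_cong)
  finally show ?thesis .
qed

lemma row_ls_map_nonzero: "row i (ls_map X) \<noteq> 0"
proof
  let ?A = "matrix_inv (transpose X ** X)"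
  assume "row i (ls_map X) = 0"
  then have "X *v (?A *v axis i 1) = X *v 0" by (simp add: row_ls_map_eq)
  moreover have "inj ((*v) X)" using rank by (simp add: full_rank_injective)
  ultimately have "?A *v axis i 1 = 0" by (rule injD[rotated])
  then have "(transpose X ** X) *v (?A *v axis i 1) = 0" by simp
  then show False
    by (simp add: matrix_vector_mul_assoc matrix_inv_inverse(1)[OF invertible_gram] axis_eq_0_iff)
qed

lemma xi_eq_norm_row_ls_map: "xi X i = sqrt (real CARD('n)) * norm (row i (ls_map X))"
proof -
  let ?n = "real CARD('n)"
  have "matrix_inv ((1 / ?n) *\<^sub>R (transpose X ** X)) = ?n *\<^sub>R matrix_inv (transpose X ** X)"
    by (rule matrix_inv_unique)
       (simp_all add: matrix_scalar_ac scalar_matrix_assoc[symmetric] matrix_inv_inverse[OF invertible_gram])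
  then show ?thesis
    by (simp add: xi_def real_sqrt_mult inner_row_ls_map[symmetric] norm_eq_sqrt_inner)
qed

end

section \<open>Coverage probability\<close>

lemma borel_measurable_matrix_vector_mult[measurable]:
  assumes "f \<in> borel_measurable M"
  shows "(\<lambda>x. (A :: real^'a^'b) *v f x) \<in> borel_measurable M"
  using measurable_comp[OF assms borel_measurable_linear[OF matrix_vector_mul_linear]]
  by (simp add: o_def)

lemma borel_measurable_vec_nth[measurable]:
  assumes "f \<in> borel_measurable M"
  shows "(\<lambda>x. (f x :: real^'n) $ i) \<in> borel_measurable M"
proof -
  have "linear (\<lambda>v::real^'n. v $ i)" by (rule linearI) simp_all
  from measurable_comp[OF assms borel_measurable_linear[OF this]] show ?thesis by (simp add: o_def)
qed

lemma sets_E_H_mem: "{y. t \<in> E_H X \<eta> a i y} \<in> sets borel"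
proof -
  have "{y. t \<in> E_H X \<eta> a i y} = {y. theta_H X \<eta> i y - sigma_hat X y * a \<le> t \<and> t \<le> theta_H X \<eta> i y + sigma_hat X y * a}"
    by (auto simp: E_H_def)
  also have "\<dots> \<in> sets borel"
    unfolding theta_H_def sigma_hat_def theta_LS_def by measurable
  finally show ?thesis .
qed

lemma measure_P_model:
  assumes "A \<in> sets borel"
  shows "measure (P_model X \<theta> \<sigma>) A = measure (error_law \<sigma>) {u. X *v \<theta> + u \<in> A}"
proof -
  have "(\<lambda>u. X *v \<theta> + u) \<in> error_law \<sigma> \<rightarrow>\<^sub>M lborel" by simp
  moreover have "space (error_law \<sigma>) = UNIV" by (simp add: error_law_def)
  ultimately show ?thesis
    unfolding P_model_def using assms by (subst measure_distr) (simp_all add: vimage_def)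
qed

lemma hard_threshold_interval_covers:
  fixes t d h c :: real
  assumes "0 \<le> c" and "- h \<le> s * d" and "s * d \<le> h - c" and "s = (if t \<ge> 0 then -1 else 1)"
  shows "t \<in> {(t + d) * (if \<bar>t + d\<bar> > c then 1 else 0) - h .. (t + d) * (if \<bar>t + d\<bar> > c then 1 else 0) + h}"
  using assms by (cases "t \<ge> 0") (auto simp: abs_if)

lemma measure_t_ratio_between:
  fixes S :: "'n::finite set" and k :: 'n
  assumes \<sigma>: "0 < \<sigma>" and S: "S \<noteq> {}" "k \<notin> S"
  shows "student_t_cdf (card S) d - student_t_cdf (card S) c
       \<le> measure (error_law \<sigma>)
           {y. c * coord_norm S y / sqrt (card S) \<le> y$k \<and> y$k \<le> d * coord_norm S y / sqrt (card S)}"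
proof -
  interpret prob_space "error_law \<sigma> :: (real^'n) measure" by (rule prob_space_error_law[OF \<sigma>])
  let ?le = "\<lambda>x. {y::real^'n. y$k \<le> x * coord_norm S y / sqrt (card S)}"
  let ?between = "{y. c * coord_norm S y / sqrt (card S) \<le> y$k \<and> y$k \<le> d * coord_norm S y / sqrt (card S)}"
  have "measure (error_law \<sigma>) (?le d) \<le> measure (error_law \<sigma>) (?between \<union> ?le c)"
    by (rule finite_measure_mono) auto
  also have "\<dots> \<le> measure (error_law \<sigma>) ?between + measure (error_law \<sigma>) (?le c)"
    by (rule measure_Un_le) simp_all
  finally show ?thesis
    by (simp add: measure_error_law_t_ratio_le[OF \<sigma> S])
qed

lemma measure_studentized_projection_between:
  fixes X :: "real^'k^'n" and e :: "real^'n"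
  assumes rank: "rank X = CARD('k)" and nk: "CARD('n) > CARD('k)" and \<sigma>: "0 < \<sigma>"
    and e: "norm e = 1" and eV: "\<And>v. v \<in> col_space_orth X \<Longrightarrow> e \<bullet> v = 0"
  defines "\<rho> u \<equiv> norm (resid X u) / sqrt (real (CARD('n) - CARD('k)))"
  shows "student_t_cdf (CARD('n) - CARD('k)) d - student_t_cdf (CARD('n) - CARD('k)) c
       \<le> measure (error_law \<sigma>) {u. c * \<rho> u \<le> e \<bullet> u \<and> e \<bullet> u \<le> d * \<rho> u}"
proof -
  obtain b :: "'n \<Rightarrow> real^'n" and k S where
    b: "\<And>j l. b j \<bullet> b l = (if j = l then 1 else 0)" and bk: "b k = e" and kS: "k \<notin> S"
    and card: "card S = dim (col_space_orth X)" and bV: "\<And>j. j \<in> S \<Longrightarrow> b j \<in> col_space_orth X"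
    and bV': "\<And>j v. j \<notin> S \<Longrightarrow> v \<in> col_space_orth X \<Longrightarrow> b j \<bullet> v = 0"
    using orthonormal_frame_adapted[OF subspace_col_space_orth e eV] by metis
  have card: "card S = CARD('n) - CARD('k)" using card dim_col_space_orth[OF rank] by simp
  with nk have S: "S \<noteq> {}" by auto
  define Q where "Q y = (\<Sum>j\<in>UNIV. y$j *\<^sub>R b j)" for y :: "real^'n"
  note Q = orthonormal_frame_map[OF b, folded Q_def]
  have "resid X (Q y) = (\<Sum>j\<in>S. y$j *\<^sub>R b j)" for y
  proof (rule resid_unique[OF rank])
    show "(\<Sum>j\<in>S. y$j *\<^sub>R b j) \<in> col_space_orth X"
      using bV subspace_col_space_orth by (intro subspace_sum subspace_scale) auto
    show "(Q y - (\<Sum>j\<in>S. y$j *\<^sub>R b j)) \<bullet> z = 0" if "z \<in> col_space_orth X" for z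
      using bV'[OF _ that] by (simp add: Q(3)[of y S] inner_sum_left)
  qed
  then have \<rho>Q: "\<rho> (Q y) = coord_norm S y / sqrt (card S)" for y
    unfolding \<rho>_def card by (simp add: Q(4))
  have [measurable]: "resid X \<in> borel_measurable borel"
    unfolding resid_def[abs_def] by measurable
  have "{u. c * \<rho> u \<le> e \<bullet> u \<and> e \<bullet> u \<le> d * \<rho> u} \<in> sets borel"
    unfolding \<rho>_def by measurable
  then have "measure (error_law \<sigma>) {u. c * \<rho> u \<le> e \<bullet> u \<and> e \<bullet> u \<le> d * \<rho> u}
      = measure (error_law \<sigma>) {y. c * coord_norm S y / sqrt (card S) \<le> y$k \<and> y$k \<le> d * coord_norm S y / sqrt (card S)}"
    by (subst measure_error_law_orthogonal_preimage[OF Q(1), symmetric])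
       (simp_all add: \<rho>Q Q(2)[of k, unfolded bk])
  with measure_t_ratio_between[OF \<sigma> S kS, of d c] show ?thesis
    by (simp add: card)
qed

lemma sigma_hat_model:
  fixes X :: "real^'k^'n"
  assumes "rank X = CARD('k)" and "CARD('n) > CARD('k)"
  shows "sigma_hat X (X *v \<theta> + u) = norm (resid X u) / sqrt (real (CARD('n) - CARD('k)))"
  using assms(2) by (simp add: sigma_hat_def resid_model[OF assms(1)] of_nat_diff real_sqrt_divide)

lemma theta_in_E_H_if_studentized_error_between:
  fixes X :: "real^'k^'n" and \<theta> :: "real^'k" and u :: "real^'n" and i :: 'k and a \<eta> :: real
  assumes rank: "rank X = CARD('k)" and nk: "CARD('n) > CARD('k)" and \<eta>: "\<eta> \<ge> 0"
  defines "w \<equiv> row i (ls_map X)" and "s \<equiv> (if \<theta> $ i \<ge> 0 then -1 else 1 :: real)"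
    and "\<rho> \<equiv> norm (resid X u) / sqrt (real (CARD('n) - CARD('k)))"
  assumes lower: "(- sqrt (real CARD('n)) * a / xi X i) * \<rho> \<le> s * (w \<bullet> u) / norm w"
    and upper: "s * (w \<bullet> u) / norm w \<le> (sqrt (real CARD('n)) * (a / xi X i - \<eta>)) * \<rho>"
  shows "\<theta> $ i \<in> E_H X \<eta> a i (X *v \<theta> + u)"
proof -
  have w: "norm w > 0" unfolding w_def using row_ls_map_nonzero[OF rank] by simp
  have xi: "xi X i = sqrt (real CARD('n)) * norm w"
    unfolding w_def by (rule xi_eq_norm_row_ls_map[OF rank])
  have "- a / norm w * \<rho> \<le> s * (w \<bullet> u) / norm w"
    using lower w unfolding xi by (simp add: field_simps)
  then have low: "- (\<rho> * a) \<le> s * (w \<bullet> u)"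
    using w by (simp add: field_simps)
  have "(sqrt (real CARD('n)) * (a / xi X i - \<eta>)) * \<rho>
      = (a - sqrt (real CARD('n)) * norm w * \<eta>) * \<rho> / norm w"
    using w unfolding xi by (simp add: field_simps)
  with upper have "s * (w \<bullet> u) \<le> (a - sqrt (real CARD('n)) * norm w * \<eta>) * \<rho>"
    using w by (simp add: divide_le_cancel)
  then have up: "s * (w \<bullet> u) \<le> \<rho> * a - \<rho> * xi X i * \<eta>"
    unfolding xi by (simp add: algebra_simps)
  have "0 \<le> \<rho> * xi X i * \<eta>"
    unfolding \<rho>_def xi using \<eta> by simp
  from hard_threshold_interval_covers[OF this low up s_def[THEN meta_eq_to_obj_eq]]
  have "\<theta> $ i \<in> {(\<theta> $ i + w \<bullet> u) * (if \<bar>\<theta> $ i + w \<bullet> u\<bar> > \<rho> * xi X i * \<eta> then 1 else 0) - \<rho> * a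
      .. (\<theta> $ i + w \<bullet> u) * (if \<bar>\<theta> $ i + w \<bullet> u\<bar> > \<rho> * xi X i * \<eta> then 1 else 0) + \<rho> * a}" .
  moreover have "theta_LS X (X *v \<theta> + u) $ i = \<theta> $ i + w \<bullet> u"
    by (simp add: theta_LS_model[OF rank] ls_map_component w_def)
  moreover have "sigma_hat X (X *v \<theta> + u) = \<rho>"
    by (simp add: sigma_hat_model[OF rank nk] \<rho>_def)
  ultimately show ?thesis
    unfolding E_H_def theta_H_def by simp
qed

lemma coverage_probability_lower_bound:
  fixes X :: "real^'k^'n" and \<theta> :: "real^'k" and i :: 'k and a \<eta> :: real
  assumes rank: "rank X = CARD('k)" and nk: "CARD('n) > CARD('k)"
    and \<eta>: "\<eta> > 0" and \<sigma>: "\<sigma> > 0"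
  shows "student_t_cdf (CARD('n) - CARD('k)) (sqrt (real CARD('n)) * (a / xi X i - \<eta>))
           - student_t_cdf (CARD('n) - CARD('k)) (- sqrt (real CARD('n)) * a / xi X i)
         \<le> measure (P_model X \<theta> \<sigma>) {y. \<theta> $ i \<in> E_H X \<eta> a i y}"
proof -
  interpret prob_space "error_law \<sigma> :: (real^'n) measure" by (rule prob_space_error_law[OF \<sigma>])
  define w where "w = row i (ls_map X)"
  define s where "s = (if \<theta> $ i \<ge> 0 then -1 else 1 :: real)"
  define e where "e = (s / norm w) *\<^sub>R w"
  define \<rho> where "\<rho> u = norm (resid X u) / sqrt (real (CARD('n) - CARD('k)))" for u
  define c where "c = - sqrt (real CARD('n)) * a / xi X i"
  define d where "d = sqrt (real CARD('n)) * (a / xi X i - \<eta>)"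
  have "norm e = 1"
    unfolding e_def s_def w_def using row_ls_map_nonzero[OF rank] by simp
  moreover have "e \<bullet> v = 0" if "v \<in> col_space_orth X" for v
    unfolding e_def w_def using row_ls_map_orth[OF rank that] by simp
  ultimately have "student_t_cdf (CARD('n) - CARD('k)) d - student_t_cdf (CARD('n) - CARD('k)) c
      \<le> measure (error_law \<sigma>) {u. c * \<rho> u \<le> e \<bullet> u \<and> e \<bullet> u \<le> d * \<rho> u}"
    unfolding \<rho>_def by (rule measure_studentized_projection_between[OF rank nk \<sigma>])
  also have "\<dots> \<le> measure (error_law \<sigma>) {u. X *v \<theta> + u \<in> {y. \<theta> $ i \<in> E_H X \<eta> a i y}}"
  proof (rule finite_measure_mono)
    show "{u. X *v \<theta> + u \<in> {y. \<theta> $ i \<in> E_H X \<eta> a i y}} \<in> sets (error_law \<sigma>)"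
      using sets_E_H_mem by measurable
    have "e \<bullet> u = s * (w \<bullet> u) / norm w" for u unfolding e_def by simp
    then show "{u. c * \<rho> u \<le> e \<bullet> u \<and> e \<bullet> u \<le> d * \<rho> u} \<subseteq> {u. X *v \<theta> + u \<in> {y. \<theta> $ i \<in> E_H X \<eta> a i y}}"
      using theta_in_E_H_if_studentized_error_between[OF rank nk less_imp_le[OF \<eta>]]
      unfolding c_def d_def \<rho>_def s_def w_def by auto
  qed
  also have "\<dots> = measure (P_model X \<theta> \<sigma>) {y. \<theta> $ i \<in> E_H X \<eta> a i y}"
    by (rule measure_P_model[symmetric]) (rule sets_E_H_mem)
  finally show ?thesis unfolding c_def d_def .
qed

theorem proposition14:
  fixes X :: "real^'k^'n" and i :: 'k and \<eta> a :: real
  assumes "rank X = CARD('k)"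
    and "CARD('n) \<ge> 2" and "CARD('n) > CARD('k)"
    and "\<eta> > 0" and "a \<ge> 0"
  shows "(INF p \<in> (UNIV :: (real^'k) set) \<times> {0<..}.
            measure (P_model X (fst p) (snd p)) {y. fst p $ i \<in> E_H X \<eta> a i y})
         \<ge> student_t_cdf (CARD('n) - CARD('k))
               (sqrt (real CARD('n)) * (a / xi X i - \<eta>))
           - student_t_cdf (CARD('n) - CARD('k))
               (- sqrt (real CARD('n)) * a / xi X i)"
proof (rule cINF_greatest)
  show "(UNIV :: (real^'k) set) \<times> {0::real<..} \<noteq> {}" by auto
  fix p :: "(real^'k) \<times> real" assume "p \<in> (UNIV :: (real^'k) set) \<times> {0<..}"
  then show "student_t_cdf (CARD('n) - CARD('k)) (sqrt (real CARD('n)) * (a / xi X i - \<eta>))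
           - student_t_cdf (CARD('n) - CARD('k)) (- sqrt (real CARD('n)) * a / xi X i)
        \<le> measure (P_model X (fst p) (snd p)) {y. fst p $ i \<in> E_H X \<eta> a i y}"
    using coverage_probability_lower_bound[OF assms(1,3,4)] by auto
qed

end
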